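(* In a generalised differential Seely category, let $g:X\times\mathcal U(A)\to\mathcal U(B)$ be a morphism of $\mathscr C$ such that $g=⦃(f,u)⦄;\pi_2$ for some morphism $(f,u):(X,A)\to(Y,B)$ of $LS(\mathscr C)$. Then $\mathrm D_2(g)=\pi_1^*(\mathrm{id}_X,u)$, where $\pi_1:X\times\mathcal U(A)\to X$.
   Context: Composition is diagrammatic; monoidal categories are strict. Setting: an LNL adjunction $\mathcal F\dashv\mathcal U$, $\mathcal F:\mathscr C\to\mathcal L$, between cartesian $(\mathscr C,\times,I)$ and symmetric monoidal $(\mathcal L,\otimes,1)$; $\mathcal U$ lax monoidal via $n_{A,B}:\mathcal U(A)\times\mathcal U(B)\to\mathcal U(A\otimes B)$; $\mathcal F$ strong monoidal via isomorphisms $m_{X,Y}$, $m_1$; unit $\eta$; $\mathbf c_X:=\mathcal F(\Delta_X);m_{X,X}^{-1}$, $\mathbf w_X:=\mathcal F(t_X);m_1^{-1}$. $LS(\mathscr C)$: objects $(X,A)$; morphisms $(f,u):(X,A)\to(Y,B)$ with $f:X\to Y$, $u:\mathcal F(X)\otimes A\to B$; composition $(f,u);(g,v)=(f;g,(\mathbf c_X\otimes\mathrm{id}_A);(\mathcal F(f)\otimes u);v)$; identity $(\mathrm{id}_X,\mathbf w_X\otimes\mathrm{id}_A)$; $\mathbf{ls}(f,u)=f$; fibre over $X$ = morphisms $(\mathrm{id}_X,u)$; reindexing along $h:X'\to X$: $h^*(X,B)=(X',B)$, $h^*(\mathrm{id}_X,v)=(\mathrm{id}_{X'},(\mathcal F(h)\otimes\mathrm{id}_B);v)$.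 With biproducts $\oplus$ in $\mathcal L$: fibrewise injections $\iota^X_i=(\mathrm{id}_X,\mathbf w_X\otimes\iota_i)$; products in $LS(\mathscr C)$: $(X\times Y,A\oplus B)$, projections $(\pi_i,\mathbf w_{X\times Y}\otimes\pi_i)$. GDSC: $\mathcal L$ additive (CMon-enriched, $\otimes$ bilinear) with finite products, and a functor $\mathcal T:\mathscr C\to LS(\mathscr C)$ with: (t.1) $\mathbf{ls}\circ\mathcal T=\mathrm{id}$, so $\mathcal T(X)=(X,\lambda(X))$, and $\varphi_{X,Y}:=\langle\mathcal T(\pi_1),\mathcal T(\pi_2)\rangle:\mathcal T(X\times Y)\to(X\times Y,\lambda(X)\oplus\lambda(Y))$ is an isomorphism; (t.2) $\mathcal T(\mathcal U(A))=(\mathcal U(A),A)$; (t.3) with $i^{X,Y}_2:=\iota^{X\times Y}_2;\varphi^{-1}_{X,Y}$, comprehension $⦃(f,u)⦄:=\langle\pi_1;f,(\eta_X\times\mathrm{id}_{\mathcal U(A)});n_{\mathcal F(X),A};\mathcal U(u)\rangle:X\times\mathcal U(A)\to Y\times\mathcal U(B)$, weakening $W(f,u):=(⦃(f,u)⦄,(\mathcal F(\pi_1)\otimes\mathrm{id}_A);u)$: $W(f,u);i^{Y,\mathcal U(B)}_2=i^{X,\mathcal U(A)}_2;\mathcal T(⦃(f,u)⦄)$. Differential: for $h:X\to Y$ with $\mathcal T(h)=(h,v)$, $\mathrm D(h):=(\mathrm{id}_X,v)$. Partial differential: for $h:X\times Y\to Z$, $\mathrm D_2(h):=i^{X,Y}_2;\mathrm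 D(h):(X\times Y,\lambda(Y))\to(X\times Y,\lambda(Z))$. *)

theory Defs
  imports Main
begin

section \<open>Categories (composition written diagrammatically: Cp C f g = f;g)\<close>

record ('o,'m) cat =
  Ob  :: "'o set"
  Ar  :: "'m set"
  Dm  :: "'m \<Rightarrow> 'o"
  Cd  :: "'m \<Rightarrow> 'o"
  idm :: "'o \<Rightarrow> 'm"
  Cp  :: "'m \<Rightarrow> 'm \<Rightarrow> 'm"

definition hom :: "('o,'m,'x) cat_scheme \<Rightarrow> 'o \<Rightarrow> 'o \<Rightarrow> 'm set" where
  "hom C X Y = {f \<in> Ar C. Dm C f = X \<and> Cd C f = Y}"

definition is_cat :: "('o,'m,'x) cat_scheme \<Rightarrow> bool" where
  "is_cat C \<longleftrightarrow>
     (\<forall>f \<in> Ar C. Dm C f \<in> Ob C \<and> Cd C f \<in> Ob C) \<and>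
     (\<forall>X \<in> Ob C. idm C X \<in> hom C X X) \<and>
     (\<forall>f \<in> Ar C. \<forall>g \<in> Ar C. Cd C f = Dm C g \<longrightarrow> Cp C f g \<in> hom C (Dm C f) (Cd C g)) \<and>
     (\<forall>f \<in> Ar C. Cp C (idm C (Dm C f)) f = f \<and> Cp C f (idm C (Cd C f)) = f) \<and>
     (\<forall>f \<in> Ar C. \<forall>g \<in> Ar C. \<forall>h \<in> Ar C. Cd C f = Dm C g \<longrightarrow> Cd C g = Dm C h \<longrightarrow>
        Cp C (Cp C f g) h = Cp C f (Cp C g h))"

definition is_functor :: "('a,'b,'x) cat_scheme \<Rightarrow> ('c,'d,'y) cat_scheme \<Rightarrow>
    ('a \<Rightarrow> 'c) \<Rightarrow> ('b \<Rightarrow> 'd) \<Rightarrow> bool" where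
  "is_functor C D Fo Fm \<longleftrightarrow>
     (\<forall>X \<in> Ob C. Fo X \<in> Ob D \<and> Fm (idm C X) = idm D (Fo X)) \<and>
     (\<forall>f \<in> Ar C. Fm f \<in> hom D (Fo (Dm C f)) (Fo (Cd C f))) \<and>
     (\<forall>f \<in> Ar C. \<forall>g \<in> Ar C. Cd C f = Dm C g \<longrightarrow> Fm (Cp C f g) = Cp D (Fm f) (Fm g))"

section \<open>Cartesian category (chosen products, terminal object; strict)\<close>

record ('o,'m) ccat = "('o,'m) cat" +
  prd   :: "'o \<Rightarrow> 'o \<Rightarrow> 'o"
  pi1   :: "'o \<Rightarrow> 'o \<Rightarrow> 'm"
  pi2   :: "'o \<Rightarrow> 'o \<Rightarrow> 'm"
  tpl   :: "'m \<Rightarrow> 'm \<Rightarrow> 'm"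
  trm   :: "'o"
  tbang :: "'o \<Rightarrow> 'm"

definition prdm :: "('o,'m,'x) ccat_scheme \<Rightarrow> 'm \<Rightarrow> 'm \<Rightarrow> 'm" where
  "prdm C f g = tpl C (Cp C (pi1 C (Dm C f) (Dm C g)) f) (Cp C (pi2 C (Dm C f) (Dm C g)) g)"

definition diag :: "('o,'m,'x) ccat_scheme \<Rightarrow> 'o \<Rightarrow> 'm" where
  "diag C X = tpl C (idm C X) (idm C X)"

definition swp :: "('o,'m,'x) ccat_scheme \<Rightarrow> 'o \<Rightarrow> 'o \<Rightarrow> 'm" where
  "swp C X Y = tpl C (pi2 C X Y) (pi1 C X Y)"

definition is_cart :: "('o,'m,'x) ccat_scheme \<Rightarrow> bool" where
  "is_cart C \<longleftrightarrow> is_cat C \<and>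
     trm C \<in> Ob C \<and>
     (\<forall>X \<in> Ob C. tbang C X \<in> hom C X (trm C) \<and> (\<forall>h \<in> hom C X (trm C). h = tbang C X)) \<and>
     (\<forall>X \<in> Ob C. \<forall>Y \<in> Ob C. prd C X Y \<in> Ob C \<and>
        pi1 C X Y \<in> hom C (prd C X Y) X \<and> pi2 C X Y \<in> hom C (prd C X Y) Y) \<and>
     (\<forall>Z \<in> Ob C. \<forall>X \<in> Ob C. \<forall>Y \<in> Ob C. \<forall>f \<in> hom C Z X. \<forall>g \<in> hom C Z Y.
        tpl C f g \<in> hom C Z (prd C X Y) \<and>
        Cp C (tpl C f g) (pi1 C X Y) = f \<and> Cp C (tpl C f g) (pi2 C X Y) = g) \<and>
     (\<forall>Z \<in> Ob C. \<forall>X \<in> Ob C. \<forall>Y \<in> Ob C. \<forall>h \<in> hom C Z (prd C X Y).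
        h = tpl C (Cp C h (pi1 C X Y)) (Cp C h (pi2 C X Y))) \<and>
     \<comment> \<open>strictness of the cartesian monoidal structure\<close>
     (\<forall>X \<in> Ob C. \<forall>Y \<in> Ob C. \<forall>Z \<in> Ob C.
        prd C (prd C X Y) Z = prd C X (prd C Y Z) \<and>
        tpl C (Cp C (pi1 C (prd C X Y) Z) (pi1 C X Y))
              (tpl C (Cp C (pi1 C (prd C X Y) Z) (pi2 C X Y)) (pi2 C (prd C X Y) Z))
          = idm C (prd C X (prd C Y Z))) \<and>
     (\<forall>X \<in> Ob C. prd C (trm C) X = X \<and> prd C X (trm C) = X \<and>
        pi2 C (trm C) X = idm C X \<and> pi1 C X (trm C) = idm C X)"

section \<open>Additive symmetric monoidal category with finite products (strict)\<close>

record ('o,'m) acat = "('o,'m) cat" +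
  tns   :: "'o \<Rightarrow> 'o \<Rightarrow> 'o"
  tnsm  :: "'m \<Rightarrow> 'm \<Rightarrow> 'm"
  tunit :: "'o"
  symm  :: "'o \<Rightarrow> 'o \<Rightarrow> 'm"
  zer   :: "'o \<Rightarrow> 'o \<Rightarrow> 'm"
  pls   :: "'m \<Rightarrow> 'm \<Rightarrow> 'm"
  bp    :: "'o \<Rightarrow> 'o \<Rightarrow> 'o"
  bq1   :: "'o \<Rightarrow> 'o \<Rightarrow> 'm"
  bq2   :: "'o \<Rightarrow> 'o \<Rightarrow> 'm"
  btpl  :: "'m \<Rightarrow> 'm \<Rightarrow> 'm"
  bterm :: "'o"
  bbang :: "'o \<Rightarrow> 'm"

definition is_addsmc :: "('o,'m,'x) acat_scheme \<Rightarrow> bool" where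
  "is_addsmc L \<longleftrightarrow> is_cat L \<and>
     \<comment> \<open>tensor bifunctor\<close>
     tunit L \<in> Ob L \<and>
     (\<forall>A \<in> Ob L. \<forall>B \<in> Ob L. tns L A B \<in> Ob L \<and> tnsm L (idm L A) (idm L B) = idm L (tns L A B)) \<and>
     (\<forall>A \<in> Ob L. \<forall>B \<in> Ob L. \<forall>C \<in> Ob L. \<forall>D \<in> Ob L. \<forall>f \<in> hom L A B. \<forall>g \<in> hom L C D.
        tnsm L f g \<in> hom L (tns L A C) (tns L B D)) \<and>
     (\<forall>f \<in> Ar L. \<forall>f' \<in> Ar L. \<forall>g \<in> Ar L. \<forall>g' \<in> Ar L. Cd L f = Dm L f' \<longrightarrow> Cd L g = Dm L g' \<longrightarrow>
        tnsm L (Cp L f f') (Cp L g g') = Cp L (tnsm L f g) (tnsm L f' g')) \<and>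
     \<comment> \<open>strictness\<close>
     (\<forall>A \<in> Ob L. \<forall>B \<in> Ob L. \<forall>C \<in> Ob L. tns L (tns L A B) C = tns L A (tns L B C)) \<and>
     (\<forall>A \<in> Ob L. tns L (tunit L) A = A \<and> tns L A (tunit L) = A) \<and>
     (\<forall>f \<in> Ar L. \<forall>g \<in> Ar L. \<forall>h \<in> Ar L. tnsm L (tnsm L f g) h = tnsm L f (tnsm L g h)) \<and>
     (\<forall>f \<in> Ar L. tnsm L (idm L (tunit L)) f = f \<and> tnsm L f (idm L (tunit L)) = f) \<and>
     \<comment> \<open>symmetry\<close>
     (\<forall>A \<in> Ob L. \<forall>B \<in> Ob L. symm L A B \<in> hom L (tns L A B) (tns L B A) \<and>
        Cp L (symm L A B) (symm L B A) = idm L (tns L A B)) \<and>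
     (\<forall>A \<in> Ob L. \<forall>A' \<in> Ob L. \<forall>B \<in> Ob L. \<forall>B' \<in> Ob L. \<forall>f \<in> hom L A A'. \<forall>g \<in> hom L B B'.
        Cp L (tnsm L f g) (symm L A' B') = Cp L (symm L A B) (tnsm L g f)) \<and>
     (\<forall>A \<in> Ob L. \<forall>B \<in> Ob L. \<forall>C \<in> Ob L.
        symm L A (tns L B C) = Cp L (tnsm L (symm L A B) (idm L C)) (tnsm L (idm L B) (symm L A C))) \<and>
     \<comment> \<open>CMon-enrichment\<close>
     (\<forall>A \<in> Ob L. \<forall>B \<in> Ob L. zer L A B \<in> hom L A B \<and>
        (\<forall>f \<in> hom L A B. \<forall>g \<in> hom L A B. pls L f g \<in> hom L A B \<and> pls L f g = pls L g f \<and>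
            pls L f (zer L A B) = f \<and>
            (\<forall>h \<in> hom L A B. pls L (pls L f g) h = pls L f (pls L g h)))) \<and>
     (\<forall>A \<in> Ob L. \<forall>B \<in> Ob L. \<forall>C \<in> Ob L. \<forall>f \<in> hom L A B. \<forall>g \<in> hom L B C. \<forall>h \<in> hom L B C.
        Cp L f (pls L g h) = pls L (Cp L f g) (Cp L f h) \<and> Cp L f (zer L B C) = zer L A C) \<and>
     (\<forall>A \<in> Ob L. \<forall>B \<in> Ob L. \<forall>C \<in> Ob L. \<forall>g \<in> hom L A B. \<forall>h \<in> hom L A B. \<forall>f \<in> hom L B C.
        Cp L (pls L g h) f = pls L (Cp L g f) (Cp L h f) \<and> Cp L (zer L A B) f = zer L A C) \<and>
     \<comment> \<open>bilinearity of the tensor\<close>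
     (\<forall>A \<in> Ob L. \<forall>B \<in> Ob L. \<forall>C \<in> Ob L. \<forall>D \<in> Ob L. \<forall>f \<in> hom L A B. \<forall>g \<in> hom L C D. \<forall>h \<in> hom L C D.
        tnsm L f (pls L g h) = pls L (tnsm L f g) (tnsm L f h) \<and>
        tnsm L f (zer L C D) = zer L (tns L A C) (tns L B D)) \<and>
     (\<forall>A \<in> Ob L. \<forall>B \<in> Ob L. \<forall>C \<in> Ob L. \<forall>D \<in> Ob L. \<forall>f \<in> hom L A B. \<forall>g \<in> hom L A B. \<forall>h \<in> hom L C D.
        tnsm L (pls L f g) h = pls L (tnsm L f h) (tnsm L g h) \<and>
        tnsm L (zer L A B) h = zer L (tns L A C) (tns L B D)) \<and>
     \<comment> \<open>finite products\<close>
     bterm L \<in> Ob L \<and>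
     (\<forall>A \<in> Ob L. bbang L A \<in> hom L A (bterm L) \<and> (\<forall>h \<in> hom L A (bterm L). h = bbang L A)) \<and>
     (\<forall>A \<in> Ob L. \<forall>B \<in> Ob L. bp L A B \<in> Ob L \<and>
        bq1 L A B \<in> hom L (bp L A B) A \<and> bq2 L A B \<in> hom L (bp L A B) B) \<and>
     (\<forall>C \<in> Ob L. \<forall>A \<in> Ob L. \<forall>B \<in> Ob L. \<forall>f \<in> hom L C A. \<forall>g \<in> hom L C B.
        btpl L f g \<in> hom L C (bp L A B) \<and>
        Cp L (btpl L f g) (bq1 L A B) = f \<and> Cp L (btpl L f g) (bq2 L A B) = g) \<and>
     (\<forall>C \<in> Ob L. \<forall>A \<in> Ob L. \<forall>B \<in> Ob L. \<forall>h \<in> hom L C (bp L A B).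
        h = btpl L (Cp L h (bq1 L A B)) (Cp L h (bq2 L A B)))"

text \<open>Biproduct injections (A \<oplus> B is the product; injections via zero maps).\<close>
definition binj1 :: "('o,'m,'x) acat_scheme \<Rightarrow> 'o \<Rightarrow> 'o \<Rightarrow> 'm" where
  "binj1 L A B = btpl L (idm L A) (zer L A B)"
definition binj2 :: "('o,'m,'x) acat_scheme \<Rightarrow> 'o \<Rightarrow> 'o \<Rightarrow> 'm" where
  "binj2 L A B = btpl L (zer L B A) (idm L B)"

section \<open>LNL adjunction data\<close>

record ('c,'f,'l,'g) lnl =
  Fo    :: "'c \<Rightarrow> 'l"
  Fm    :: "'f \<Rightarrow> 'g"
  Uo    :: "'l \<Rightarrow> 'c"
  Um    :: "'g \<Rightarrow> 'f"
  eta   :: "'c \<Rightarrow> 'f"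
  eps   :: "'l \<Rightarrow> 'g"
  mm    :: "'c \<Rightarrow> 'c \<Rightarrow> 'g"
  mminv :: "'c \<Rightarrow> 'c \<Rightarrow> 'g"
  mone  :: "'g"
  moneinv :: "'g"
  nn    :: "'l \<Rightarrow> 'l \<Rightarrow> 'f"
  nzero :: "'f"

definition is_lnl :: "('c,'f,'x) ccat_scheme \<Rightarrow> ('l,'g,'y) acat_scheme \<Rightarrow> ('c,'f,'l,'g,'z) lnl_scheme \<Rightarrow> bool" where
  "is_lnl C L M \<longleftrightarrow>
     is_functor C L (Fo M) (Fm M) \<and> is_functor L C (Uo M) (Um M) \<and>
     \<comment> \<open>adjunction F \<dashv> U with unit eta and counit eps\<close>
     (\<forall>X \<in> Ob C. eta M X \<in> hom C X (Uo M (Fo M X))) \<and>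
     (\<forall>f \<in> Ar C. Cp C f (eta M (Cd C f)) = Cp C (eta M (Dm C f)) (Um M (Fm M f))) \<and>
     (\<forall>A \<in> Ob L. eps M A \<in> hom L (Fo M (Uo M A)) A) \<and>
     (\<forall>g \<in> Ar L. Cp L (Fm M (Um M g)) (eps M (Cd L g)) = Cp L (eps M (Dm L g)) g) \<and>
     (\<forall>X \<in> Ob C. Cp L (Fm M (eta M X)) (eps M (Fo M X)) = idm L (Fo M X)) \<and>
     (\<forall>A \<in> Ob L. Cp C (eta M (Uo M A)) (Um M (eps M A)) = idm C (Uo M A)) \<and>
     \<comment> \<open>F strong symmetric monoidal\<close>
     (\<forall>X \<in> Ob C. \<forall>Y \<in> Ob C.
        mm M X Y \<in> hom L (tns L (Fo M X) (Fo M Y)) (Fo M (prd C X Y)) \<and>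
        mminv M X Y \<in> hom L (Fo M (prd C X Y)) (tns L (Fo M X) (Fo M Y)) \<and>
        Cp L (mm M X Y) (mminv M X Y) = idm L (tns L (Fo M X) (Fo M Y)) \<and>
        Cp L (mminv M X Y) (mm M X Y) = idm L (Fo M (prd C X Y)) \<and>
        Cp L (symm L (Fo M X) (Fo M Y)) (mm M Y X) = Cp L (mm M X Y) (Fm M (swp C X Y))) \<and>
     mone M \<in> hom L (tunit L) (Fo M (trm C)) \<and>
     moneinv M \<in> hom L (Fo M (trm C)) (tunit L) \<and>
     Cp L (mone M) (moneinv M) = idm L (tunit L) \<and>
     Cp L (moneinv M) (mone M) = idm L (Fo M (trm C)) \<and>
     (\<forall>f \<in> Ar C. \<forall>g \<in> Ar C.
        Cp L (tnsm L (Fm M f) (Fm M g)) (mm M (Cd C f) (Cd C g)) = Cp L (mm M (Dm C f) (Dm C g)) (Fm M (prdm C f g))) \<and>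
     (\<forall>X \<in> Ob C. \<forall>Y \<in> Ob C. \<forall>Z \<in> Ob C.
        Cp L (tnsm L (mm M X Y) (idm L (Fo M Z))) (mm M (prd C X Y) Z)
          = Cp L (tnsm L (idm L (Fo M X)) (mm M Y Z)) (mm M X (prd C Y Z))) \<and>
     (\<forall>X \<in> Ob C. Cp L (tnsm L (mone M) (idm L (Fo M X))) (mm M (trm C) X) = idm L (Fo M X) \<and>
                  Cp L (tnsm L (idm L (Fo M X)) (mone M)) (mm M X (trm C)) = idm L (Fo M X)) \<and>
     \<comment> \<open>U lax symmetric monoidal\<close>
     (\<forall>A \<in> Ob L. \<forall>B \<in> Ob L.
        nn M A B \<in> hom C (prd C (Uo M A) (Uo M B)) (Uo M (tns L A B)) \<and>
        Cp C (swp C (Uo M A) (Uo M B)) (nn M B A) = Cp C (nn M A B) (Um M (symm L A B))) \<and>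
     nzero M \<in> hom C (trm C) (Uo M (tunit L)) \<and>
     (\<forall>f \<in> Ar L. \<forall>g \<in> Ar L.
        Cp C (prdm C (Um M f) (Um M g)) (nn M (Cd L f) (Cd L g)) = Cp C (nn M (Dm L f) (Dm L g)) (Um M (tnsm L f g))) \<and>
     (\<forall>A \<in> Ob L. \<forall>B \<in> Ob L. \<forall>D \<in> Ob L.
        Cp C (prdm C (nn M A B) (idm C (Uo M D))) (nn M (tns L A B) D)
          = Cp C (prdm C (idm C (Uo M A)) (nn M B D)) (nn M A (tns L B D))) \<and>
     (\<forall>A \<in> Ob L. Cp C (prdm C (nzero M) (idm C (Uo M A))) (nn M (tunit L) A) = idm C (Uo M A) \<and>
                  Cp C (prdm C (idm C (Uo M A)) (nzero M)) (nn M A (tunit L)) = idm C (Uo M A)) \<and>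
     \<comment> \<open>unit and counit are monoidal natural transformations\<close>
     (\<forall>X \<in> Ob C. \<forall>Y \<in> Ob C.
        Cp C (Cp C (prdm C (eta M X) (eta M Y)) (nn M (Fo M X) (Fo M Y))) (Um M (mm M X Y)) = eta M (prd C X Y)) \<and>
     Cp C (nzero M) (Um M (mone M)) = eta M (trm C) \<and>
     (\<forall>A \<in> Ob L. \<forall>B \<in> Ob L.
        Cp L (Cp L (mm M (Uo M A) (Uo M B)) (Fm M (nn M A B))) (eps M (tns L A B)) = tnsm L (eps M A) (eps M B)) \<and>
     Cp L (Cp L (mone M) (Fm M (nzero M))) (eps M (tunit L)) = idm L (tunit L)"

section \<open>The category LS(C)\<close>

text \<open>Since the fibre component A of the source cannot be read off u (strict tensor),
  operations that need it take it as an explicit argument.\<close>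

definition ls_hom where
  "ls_hom C L M XA YB = {(f,u). f \<in> hom C (fst XA) (fst YB) \<and>
       u \<in> hom L (tns L (Fo M (fst XA)) (snd XA)) (snd YB)}"

definition cpy where
  "cpy C L M X = Cp L (Fm M (diag C X)) (mminv M X X)"

definition wkn where
  "wkn C L M X = Cp L (Fm M (tbang C X)) (moneinv M)"

definition ls_comp where
  "ls_comp C L M A fu gv =
     (Cp C (fst fu) (fst gv),
      Cp L (Cp L (tnsm L (cpy C L M (Dm C (fst fu))) (idm L A)) (tnsm L (Fm M (fst fu)) (snd fu))) (snd gv))"

definition ls_id where
  "ls_id C L M X A = (idm C X, tnsm L (wkn C L M X) (idm L A))"

definition ls_pair where
  "ls_pair C L fu gv = (tpl C (fst fu) (fst gv), btpl L (snd fu) (snd gv))"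

definition ls_inj2 where
  "ls_inj2 C L M X A B = (idm C X, tnsm L (wkn C L M X) (binj2 L A B))"

definition ls_inv where
  "ls_inv C L M XA YB phi = (THE psi. psi \<in> ls_hom C L M YB XA \<and>
       ls_comp C L M (snd XA) phi psi = ls_id C L M (fst XA) (snd XA) \<and>
       ls_comp C L M (snd YB) psi phi = ls_id C L M (fst YB) (snd YB))"

definition reindex where  \<comment> \<open>h^*(id_X, v) for h : X' \<rightarrow> X and (id_X,v) : (X,B) \<rightarrow> (X,B')\<close>
  "reindex C L M h B iv = (idm C (Dm C h), Cp L (tnsm L (Fm M h) (idm L B)) (snd iv))"

section \<open>Generalised differential Seely categories\<close>

definition phi where
  "phi C L T X Y = ls_pair C L (T (pi1 C X Y)) (T (pi2 C X Y))"

definition i2 where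
  "i2 C L M T lam X Y = ls_comp C L M (lam Y)
      (ls_inj2 C L M (prd C X Y) (lam X) (lam Y))
      (ls_inv C L M (prd C X Y, lam (prd C X Y)) (prd C X Y, bp L (lam X) (lam Y)) (phi C L T X Y))"

definition compr where
  "compr C L M A fu =
     tpl C (Cp C (pi1 C (Dm C (fst fu)) (Uo M A)) (fst fu))
           (Cp C (Cp C (prdm C (eta M (Dm C (fst fu))) (idm C (Uo M A))) (nn M (Fo M (Dm C (fst fu))) A))
                 (Um M (snd fu)))"

definition Wk where
  "Wk C L M A fu = (compr C L M A fu,
       Cp L (tnsm L (Fm M (pi1 C (Dm C (fst fu)) (Uo M A))) (idm L A)) (snd fu))"

definition is_gdsc where
  "is_gdsc C L M T lam \<longleftrightarrow> is_cart C \<and> is_addsmc L \<and> is_lnl C L M \<and>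
     \<comment> \<open>T : C \<rightarrow> LS(C) is a functor with T(X) = (X, lam X)\<close>
     (\<forall>X \<in> Ob C. lam X \<in> Ob L \<and> T (idm C X) = ls_id C L M X (lam X)) \<and>
     (\<forall>h \<in> Ar C. T h \<in> ls_hom C L M (Dm C h, lam (Dm C h)) (Cd C h, lam (Cd C h))) \<and>
     (\<forall>h \<in> Ar C. \<forall>k \<in> Ar C. Cd C h = Dm C k \<longrightarrow> T (Cp C h k) = ls_comp C L M (lam (Dm C h)) (T h) (T k)) \<and>
     \<comment> \<open>(t.1)\<close>
     (\<forall>h \<in> Ar C. fst (T h) = h) \<and>
     (\<forall>X \<in> Ob C. \<forall>Y \<in> Ob C. \<exists>psi \<in> ls_hom C L M (prd C X Y, bp L (lam X) (lam Y)) (prd C X Y, lam (prd C X Y)).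
        ls_comp C L M (lam (prd C X Y)) (phi C L T X Y) psi = ls_id C L M (prd C X Y) (lam (prd C X Y)) \<and>
        ls_comp C L M (bp L (lam X) (lam Y)) psi (phi C L T X Y) = ls_id C L M (prd C X Y) (bp L (lam X) (lam Y))) \<and>
     \<comment> \<open>(t.2)\<close>
     (\<forall>A \<in> Ob L. lam (Uo M A) = A) \<and>
     \<comment> \<open>(t.3)\<close>
     (\<forall>X \<in> Ob C. \<forall>Y \<in> Ob C. \<forall>A \<in> Ob L. \<forall>B \<in> Ob L. \<forall>fu \<in> ls_hom C L M (X,A) (Y,B).
        ls_comp C L M A (Wk C L M A fu) (i2 C L M T lam Y (Uo M B))
          = ls_comp C L M (lam (Uo M A)) (i2 C L M T lam X (Uo M A)) (T (compr C L M A fu)))"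

definition Dif where
  "Dif C T h = (idm C (Dm C h), snd (T h))"

definition D2 where
  "D2 C L M T lam X Y h = ls_comp C L M (lam Y) (i2 C L M T lam X Y) (Dif C T h)"

end

theory Submission
  imports Defs
begin

(* Functoriality of T splits T(g) as T(compr (f,u)) ; T(pi2), and axiom (t.3) turns
   i2 ; T(compr (f,u)) into W(f,u) ; i2.  Since T(pi2) is phi followed by the second projection of
   the product in LS(C), and i2 is the second injection followed by the inverse of phi, the composite
   i2 ; T(pi2) collapses to the projection (pi2, w (x) id).  Postcomposing with such a morphism changes
   only the base map, so the fibre part of i2 ; T(g), which is the fibre part of D2(g), is that of
   W(f,u), namely (F(pi1) (x) id) ; u, the fibre part of pi1^*(id, u).  The cancellation of phi with
   its inverse needs LS(C) to be a category; this rests on (c_X, w_X) making F(X) a comonoid, which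
   in turn comes from the diagonal and terminal maps of C via the strong monoidal structure of F. *)

locale category =
  fixes K :: "('o,'m,'x) cat_scheme"
  assumes is_cat: "is_cat K"
begin

lemma Dm_in_Ob [simp]: "f \<in> Ar K \<Longrightarrow> Dm K f \<in> Ob K"
  and Cd_in_Ob [simp]: "f \<in> Ar K \<Longrightarrow> Cd K f \<in> Ob K"
  using is_cat by (simp_all add: is_cat_def)

lemma idm_in_Ar [simp]: "X \<in> Ob K \<Longrightarrow> idm K X \<in> Ar K"
  and Dm_idm [simp]: "X \<in> Ob K \<Longrightarrow> Dm K (idm K X) = X"
  and Cd_idm [simp]: "X \<in> Ob K \<Longrightarrow> Cd K (idm K X) = X"
  using is_cat by (auto simp: is_cat_def hom_def)

lemma Cp_in_Ar [simp]: "f \<in> Ar K \<Longrightarrow> g \<in> Ar K \<Longrightarrow> Cd K f = Dm K g \<Longrightarrow> Cp K f g \<in> Ar K"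
  and Dm_Cp [simp]: "f \<in> Ar K \<Longrightarrow> g \<in> Ar K \<Longrightarrow> Cd K f = Dm K g \<Longrightarrow> Dm K (Cp K f g) = Dm K f"
  and Cd_Cp [simp]: "f \<in> Ar K \<Longrightarrow> g \<in> Ar K \<Longrightarrow> Cd K f = Dm K g \<Longrightarrow> Cd K (Cp K f g) = Cd K g"
  using is_cat by (auto simp: is_cat_def hom_def)

lemma Cp_idm_left: "f \<in> Ar K \<Longrightarrow> Dm K f = X \<Longrightarrow> Cp K (idm K X) f = f"
  and Cp_idm_right: "f \<in> Ar K \<Longrightarrow> Cd K f = X \<Longrightarrow> Cp K f (idm K X) = f"
  using is_cat by (auto simp: is_cat_def)

lemma Cp_assoc:
  "f \<in> Ar K \<Longrightarrow> g \<in> Ar K \<Longrightarrow> h \<in> Ar K \<Longrightarrow> Cd K f = Dm K g \<Longrightarrow> Cd K g = Dm K h \<Longrightarrow>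
   Cp K (Cp K f g) h = Cp K f (Cp K g h)"
  using is_cat unfolding is_cat_def by blast

end

locale cartesian_category =
  fixes C :: "('o,'m,'x) ccat_scheme"
  assumes is_cart: "is_cart C"

sublocale cartesian_category \<subseteq> category C
  using is_cart by unfold_locales (simp add: is_cart_def)

context cartesian_category
begin

lemma trm_in_Ob [simp]: "trm C \<in> Ob C"
  using is_cart by (simp add: is_cart_def)

lemma tbang_in_Ar [simp]: "X \<in> Ob C \<Longrightarrow> tbang C X \<in> Ar C"
  and Dm_tbang [simp]: "X \<in> Ob C \<Longrightarrow> Dm C (tbang C X) = X"
  and Cd_tbang [simp]: "X \<in> Ob C \<Longrightarrow> Cd C (tbang C X) = trm C"
  using is_cart by (auto simp: is_cart_def hom_def)

lemma tbang_unique: "h \<in> Ar C \<Longrightarrow> Dm C h = X \<Longrightarrow> Cd C h = trm C \<Longrightarrow> h = tbang C X"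
  using is_cart by (auto simp: is_cart_def hom_def)

lemma prd_in_Ob [simp]: "X \<in> Ob C \<Longrightarrow> Y \<in> Ob C \<Longrightarrow> prd C X Y \<in> Ob C"
  using is_cart by (auto simp: is_cart_def)

lemma pi1_in_Ar [simp]: "X \<in> Ob C \<Longrightarrow> Y \<in> Ob C \<Longrightarrow> pi1 C X Y \<in> Ar C"
  and Dm_pi1 [simp]: "X \<in> Ob C \<Longrightarrow> Y \<in> Ob C \<Longrightarrow> Dm C (pi1 C X Y) = prd C X Y"
  and Cd_pi1 [simp]: "X \<in> Ob C \<Longrightarrow> Y \<in> Ob C \<Longrightarrow> Cd C (pi1 C X Y) = X"
  and pi2_in_Ar [simp]: "X \<in> Ob C \<Longrightarrow> Y \<in> Ob C \<Longrightarrow> pi2 C X Y \<in> Ar C"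
  and Dm_pi2 [simp]: "X \<in> Ob C \<Longrightarrow> Y \<in> Ob C \<Longrightarrow> Dm C (pi2 C X Y) = prd C X Y"
  and Cd_pi2 [simp]: "X \<in> Ob C \<Longrightarrow> Y \<in> Ob C \<Longrightarrow> Cd C (pi2 C X Y) = Y"
  using is_cart by (auto simp: is_cart_def hom_def)

lemma tpl_universal:
  assumes "f \<in> Ar C" "g \<in> Ar C" "Dm C f = Dm C g"
  shows "tpl C f g \<in> hom C (Dm C f) (prd C (Cd C f) (Cd C g)) \<and>
    Cp C (tpl C f g) (pi1 C (Cd C f) (Cd C g)) = f \<and> Cp C (tpl C f g) (pi2 C (Cd C f) (Cd C g)) = g"
proof -
  have "\<forall>Z \<in> Ob C. \<forall>X \<in> Ob C. \<forall>Y \<in> Ob C. \<forall>f \<in> hom C Z X. \<forall>g \<in> hom C Z Y.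
      tpl C f g \<in> hom C Z (prd C X Y) \<and>
      Cp C (tpl C f g) (pi1 C X Y) = f \<and> Cp C (tpl C f g) (pi2 C X Y) = g"
    using is_cart unfolding is_cart_def by (elim conjE) assumption
  moreover have "f \<in> hom C (Dm C f) (Cd C f)" "g \<in> hom C (Dm C f) (Cd C g)"
    using assms by (auto simp: hom_def)
  ultimately show ?thesis using assms by (metis Cd_in_Ob Dm_in_Ob)
qed

lemma tpl_in_Ar [simp]: "f \<in> Ar C \<Longrightarrow> g \<in> Ar C \<Longrightarrow> Dm C f = Dm C g \<Longrightarrow> tpl C f g \<in> Ar C"
  and Dm_tpl [simp]: "f \<in> Ar C \<Longrightarrow> g \<in> Ar C \<Longrightarrow> Dm C f = Dm C g \<Longrightarrow> Dm C (tpl C f g) = Dm C f"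
  and Cd_tpl [simp]:
    "f \<in> Ar C \<Longrightarrow> g \<in> Ar C \<Longrightarrow> Dm C f = Dm C g \<Longrightarrow> Cd C (tpl C f g) = prd C (Cd C f) (Cd C g)"
  using tpl_universal by (auto simp: hom_def)

lemma tpl_pi1: "f \<in> Ar C \<Longrightarrow> g \<in> Ar C \<Longrightarrow> Dm C f = Dm C g \<Longrightarrow> Cd C f = X \<Longrightarrow> Cd C g = Y \<Longrightarrow>
    Cp C (tpl C f g) (pi1 C X Y) = f"
  and tpl_pi2: "f \<in> Ar C \<Longrightarrow> g \<in> Ar C \<Longrightarrow> Dm C f = Dm C g \<Longrightarrow> Cd C f = X \<Longrightarrow> Cd C g = Y \<Longrightarrow>
    Cp C (tpl C f g) (pi2 C X Y) = g"
  using tpl_universal by auto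

lemma tpl_eta:
  assumes "h \<in> Ar C" "Cd C h = prd C X Y" "X \<in> Ob C" "Y \<in> Ob C"
  shows "h = tpl C (Cp C h (pi1 C X Y)) (Cp C h (pi2 C X Y))"
proof -
  have "\<forall>Z \<in> Ob C. \<forall>X \<in> Ob C. \<forall>Y \<in> Ob C. \<forall>h \<in> hom C Z (prd C X Y).
      h = tpl C (Cp C h (pi1 C X Y)) (Cp C h (pi2 C X Y))"
    using is_cart unfolding is_cart_def by (elim conjE) assumption
  moreover have "h \<in> hom C (Dm C h) (prd C X Y)"
    using assms by (simp add: hom_def)
  ultimately show ?thesis using assms by (metis Dm_in_Ob)
qed

lemma prd_assoc: "X \<in> Ob C \<Longrightarrow> Y \<in> Ob C \<Longrightarrow> Z \<in> Ob C \<Longrightarrow> prd C (prd C X Y) Z = prd C X (prd C Y Z)"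
  and tpl_assoc_idm: "X \<in> Ob C \<Longrightarrow> Y \<in> Ob C \<Longrightarrow> Z \<in> Ob C \<Longrightarrow>
    tpl C (Cp C (pi1 C (prd C X Y) Z) (pi1 C X Y))
          (tpl C (Cp C (pi1 C (prd C X Y) Z) (pi2 C X Y)) (pi2 C (prd C X Y) Z))
      = idm C (prd C X (prd C Y Z))"
  and prd_trm_left: "X \<in> Ob C \<Longrightarrow> prd C (trm C) X = X"
  and prd_trm_right: "X \<in> Ob C \<Longrightarrow> prd C X (trm C) = X"
  and pi2_trm: "X \<in> Ob C \<Longrightarrow> pi2 C (trm C) X = idm C X"
  and pi1_trm: "X \<in> Ob C \<Longrightarrow> pi1 C X (trm C) = idm C X"
  using is_cart by (simp_all add: is_cart_def)

lemma prdm_in_Ar [simp]: "f \<in> Ar C \<Longrightarrow> g \<in> Ar C \<Longrightarrow> prdm C f g \<in> Ar C"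
  and Dm_prdm [simp]: "f \<in> Ar C \<Longrightarrow> g \<in> Ar C \<Longrightarrow> Dm C (prdm C f g) = prd C (Dm C f) (Dm C g)"
  and Cd_prdm [simp]: "f \<in> Ar C \<Longrightarrow> g \<in> Ar C \<Longrightarrow> Cd C (prdm C f g) = prd C (Cd C f) (Cd C g)"
  by (simp_all add: prdm_def)

lemma diag_in_Ar [simp]: "X \<in> Ob C \<Longrightarrow> diag C X \<in> Ar C"
  and Dm_diag [simp]: "X \<in> Ob C \<Longrightarrow> Dm C (diag C X) = X"
  and Cd_diag [simp]: "X \<in> Ob C \<Longrightarrow> Cd C (diag C X) = prd C X X"
  by (simp_all add: diag_def)

lemma Cp_tpl: "h \<in> Ar C \<Longrightarrow> f \<in> Ar C \<Longrightarrow> g \<in> Ar C \<Longrightarrow> Cd C h = Dm C f \<Longrightarrow> Dm C f = Dm C g \<Longrightarrow>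
    Cp C h (tpl C f g) = tpl C (Cp C h f) (Cp C h g)"
  by (subst tpl_eta[of _ "Cd C f" "Cd C g"]) (simp_all add: Cp_assoc tpl_pi1 tpl_pi2)

lemma tpl_Cp_prdm: "a \<in> Ar C \<Longrightarrow> b \<in> Ar C \<Longrightarrow> f \<in> Ar C \<Longrightarrow> g \<in> Ar C \<Longrightarrow> Dm C a = Dm C b \<Longrightarrow>
    Cd C a = Dm C f \<Longrightarrow> Cd C b = Dm C g \<Longrightarrow> Cp C (tpl C a b) (prdm C f g) = tpl C (Cp C a f) (Cp C b g)"
  unfolding prdm_def by (subst Cp_tpl) (simp_all add: Cp_assoc[symmetric] tpl_pi1 tpl_pi2)

lemma Cp_tbang: "f \<in> Ar C \<Longrightarrow> Cp C f (tbang C (Cd C f)) = tbang C (Dm C f)"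
  by (rule tbang_unique) simp_all

lemma diag_Cp_prdm:
  "f \<in> Ar C \<Longrightarrow> g \<in> Ar C \<Longrightarrow> Dm C f = X \<Longrightarrow> Dm C g = X \<Longrightarrow> Cp C (diag C X) (prdm C f g) = tpl C f g"
  using Dm_in_Ob[of f] by (simp add: diag_def tpl_Cp_prdm Cp_idm_left)

lemma Cp_diag: "f \<in> Ar C \<Longrightarrow> Cp C f (diag C (Cd C f)) = tpl C f f"
  by (simp add: diag_def Cp_tpl Cp_idm_right)

(* Both sides are arrows X -> X x X x X only because products are strictly associative. *)
lemma tpl_diag_idm:
  assumes X: "X \<in> Ob C"
  shows "tpl C (diag C X) (idm C X) = tpl C (idm C X) (diag C X)"
proof -
  let ?h = "tpl C (diag C X) (idm C X)"
  have "?h = Cp C ?h (tpl C (Cp C (pi1 C (prd C X X) X) (pi1 C X X))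
              (tpl C (Cp C (pi1 C (prd C X X) X) (pi2 C X X)) (pi2 C (prd C X X) X)))"
    using X by (simp add: tpl_assoc_idm Cp_idm_right prd_assoc)
  also have "\<dots> = tpl C (idm C X) (diag C X)"
    using X by (simp add: Cp_tpl Cp_assoc[symmetric] tpl_pi1 tpl_pi2 diag_def)
  finally show ?thesis .
qed

lemma tpl_tbang_idm: "X \<in> Ob C \<Longrightarrow> tpl C (tbang C X) (idm C X) = idm C X"
  using tpl_pi2[of "tbang C X" "idm C X" "trm C" X] by (simp add: pi2_trm prd_trm_left Cp_idm_right)

lemma tpl_idm_tbang: "X \<in> Ob C \<Longrightarrow> tpl C (idm C X) (tbang C X) = idm C X"
  using tpl_pi1[of "idm C X" "tbang C X" X "trm C"] by (simp add: pi1_trm prd_trm_right Cp_idm_right)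

end

locale additive_monoidal_category =
  fixes L :: "('l,'g,'y) acat_scheme"
  assumes is_addsmc: "is_addsmc L"

sublocale additive_monoidal_category \<subseteq> category L
  using is_addsmc by unfold_locales (simp add: is_addsmc_def)

context additive_monoidal_category
begin

lemma tunit_in_Ob [simp]: "tunit L \<in> Ob L"
  and tns_in_Ob [simp]: "A \<in> Ob L \<Longrightarrow> B \<in> Ob L \<Longrightarrow> tns L A B \<in> Ob L"
  and tnsm_idm: "A \<in> Ob L \<Longrightarrow> B \<in> Ob L \<Longrightarrow> tnsm L (idm L A) (idm L B) = idm L (tns L A B)"
  using is_addsmc by (simp_all add: is_addsmc_def)

lemma tnsm_hom:
  assumes "f \<in> Ar L" "g \<in> Ar L"
  shows "tnsm L f g \<in> hom L (tns L (Dm L f) (Dm L g)) (tns L (Cd L f) (Cd L g))"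
proof -
  have "\<forall>A \<in> Ob L. \<forall>B \<in> Ob L. \<forall>C \<in> Ob L. \<forall>D \<in> Ob L. \<forall>f \<in> hom L A B. \<forall>g \<in> hom L C D.
      tnsm L f g \<in> hom L (tns L A C) (tns L B D)"
    using is_addsmc unfolding is_addsmc_def by (elim conjE) assumption
  moreover have "f \<in> hom L (Dm L f) (Cd L f)" "g \<in> hom L (Dm L g) (Cd L g)"
    using assms by (auto simp: hom_def)
  ultimately show ?thesis using assms by (metis Cd_in_Ob Dm_in_Ob)
qed

lemma tnsm_in_Ar [simp]: "f \<in> Ar L \<Longrightarrow> g \<in> Ar L \<Longrightarrow> tnsm L f g \<in> Ar L"
  and Dm_tnsm [simp]: "f \<in> Ar L \<Longrightarrow> g \<in> Ar L \<Longrightarrow> Dm L (tnsm L f g) = tns L (Dm L f) (Dm L g)"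
  and Cd_tnsm [simp]: "f \<in> Ar L \<Longrightarrow> g \<in> Ar L \<Longrightarrow> Cd L (tnsm L f g) = tns L (Cd L f) (Cd L g)"
  using tnsm_hom by (auto simp: hom_def)

lemma tnsm_Cp: "f \<in> Ar L \<Longrightarrow> f' \<in> Ar L \<Longrightarrow> g \<in> Ar L \<Longrightarrow> g' \<in> Ar L \<Longrightarrow>
    Cd L f = Dm L f' \<Longrightarrow> Cd L g = Dm L g' \<Longrightarrow>
    tnsm L (Cp L f f') (Cp L g g') = Cp L (tnsm L f g) (tnsm L f' g')"
proof -
  have "\<forall>f \<in> Ar L. \<forall>f' \<in> Ar L. \<forall>g \<in> Ar L. \<forall>g' \<in> Ar L. Cd L f = Dm L f' \<longrightarrow> Cd L g = Dm L g' \<longrightarrow>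
      tnsm L (Cp L f f') (Cp L g g') = Cp L (tnsm L f g) (tnsm L f' g')"
    using is_addsmc unfolding is_addsmc_def by (elim conjE) assumption
  then show "f \<in> Ar L \<Longrightarrow> f' \<in> Ar L \<Longrightarrow> g \<in> Ar L \<Longrightarrow> g' \<in> Ar L \<Longrightarrow>
      Cd L f = Dm L f' \<Longrightarrow> Cd L g = Dm L g' \<Longrightarrow> ?thesis"
    by blast
qed

lemma tns_assoc: "A \<in> Ob L \<Longrightarrow> B \<in> Ob L \<Longrightarrow> D \<in> Ob L \<Longrightarrow> tns L (tns L A B) D = tns L A (tns L B D)"
proof -
  have "\<forall>A \<in> Ob L. \<forall>B \<in> Ob L. \<forall>C \<in> Ob L. tns L (tns L A B) C = tns L A (tns L B C)"
    using is_addsmc unfolding is_addsmc_def by (elim conjE) assumption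
  then show "A \<in> Ob L \<Longrightarrow> B \<in> Ob L \<Longrightarrow> D \<in> Ob L \<Longrightarrow> ?thesis"
    by blast
qed

lemma tns_tunit_left: "A \<in> Ob L \<Longrightarrow> tns L (tunit L) A = A"
  and tns_tunit_right: "A \<in> Ob L \<Longrightarrow> tns L A (tunit L) = A"
proof -
  have "\<forall>A \<in> Ob L. tns L (tunit L) A = A \<and> tns L A (tunit L) = A"
    using is_addsmc unfolding is_addsmc_def by (elim conjE) assumption
  then show "A \<in> Ob L \<Longrightarrow> tns L (tunit L) A = A" "A \<in> Ob L \<Longrightarrow> tns L A (tunit L) = A"
    by blast+
qed

lemma tnsm_assoc: "f \<in> Ar L \<Longrightarrow> g \<in> Ar L \<Longrightarrow> h \<in> Ar L \<Longrightarrow> tnsm L (tnsm L f g) h = tnsm L f (tnsm L g h)"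
proof -
  have "\<forall>f \<in> Ar L. \<forall>g \<in> Ar L. \<forall>h \<in> Ar L. tnsm L (tnsm L f g) h = tnsm L f (tnsm L g h)"
    using is_addsmc unfolding is_addsmc_def by (elim conjE) assumption
  then show "f \<in> Ar L \<Longrightarrow> g \<in> Ar L \<Longrightarrow> h \<in> Ar L \<Longrightarrow> ?thesis"
    by blast
qed

lemma tnsm_tunit_left: "f \<in> Ar L \<Longrightarrow> tnsm L (idm L (tunit L)) f = f"
  and tnsm_tunit_right: "f \<in> Ar L \<Longrightarrow> tnsm L f (idm L (tunit L)) = f"
proof -
  have "\<forall>f \<in> Ar L. tnsm L (idm L (tunit L)) f = f \<and> tnsm L f (idm L (tunit L)) = f"
    using is_addsmc unfolding is_addsmc_def by (elim conjE) assumption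
  then show "f \<in> Ar L \<Longrightarrow> tnsm L (idm L (tunit L)) f = f" "f \<in> Ar L \<Longrightarrow> tnsm L f (idm L (tunit L)) = f"
    by blast+
qed

lemma Cp_tnsm_idm_right: "a \<in> Ar L \<Longrightarrow> b \<in> Ar L \<Longrightarrow> Cd L a = Dm L b \<Longrightarrow> E \<in> Ob L \<Longrightarrow>
    Cp L (tnsm L a (idm L E)) (tnsm L b (idm L E)) = tnsm L (Cp L a b) (idm L E)"
  and Cp_tnsm_idm_left: "a \<in> Ar L \<Longrightarrow> b \<in> Ar L \<Longrightarrow> Cd L a = Dm L b \<Longrightarrow> E \<in> Ob L \<Longrightarrow>
    Cp L (tnsm L (idm L E) a) (tnsm L (idm L E) b) = tnsm L (idm L E) (Cp L a b)"
  and Cp_tnsm_idm_tnsm: "a \<in> Ar L \<Longrightarrow> b \<in> Ar L \<Longrightarrow> Cd L a = Dm L b \<Longrightarrow> h \<in> Ar L \<Longrightarrow>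
    Cp L (tnsm L (idm L (Dm L h)) a) (tnsm L h b) = tnsm L h (Cp L a b)"
  by (simp_all add: tnsm_Cp[symmetric] Cp_idm_left)

lemma zer_in_Ar [simp]: "A \<in> Ob L \<Longrightarrow> B \<in> Ob L \<Longrightarrow> zer L A B \<in> Ar L"
  and Dm_zer [simp]: "A \<in> Ob L \<Longrightarrow> B \<in> Ob L \<Longrightarrow> Dm L (zer L A B) = A"
  and Cd_zer [simp]: "A \<in> Ob L \<Longrightarrow> B \<in> Ob L \<Longrightarrow> Cd L (zer L A B) = B"
proof -
  have "\<forall>A \<in> Ob L. \<forall>B \<in> Ob L. zer L A B \<in> hom L A B \<and>
      (\<forall>f \<in> hom L A B. \<forall>g \<in> hom L A B. pls L f g \<in> hom L A B \<and> pls L f g = pls L g f \<and>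
          pls L f (zer L A B) = f \<and>
          (\<forall>h \<in> hom L A B. pls L (pls L f g) h = pls L f (pls L g h)))"
    using is_addsmc unfolding is_addsmc_def by (elim conjE) assumption
  then show "A \<in> Ob L \<Longrightarrow> B \<in> Ob L \<Longrightarrow> zer L A B \<in> Ar L"
    "A \<in> Ob L \<Longrightarrow> B \<in> Ob L \<Longrightarrow> Dm L (zer L A B) = A"
    "A \<in> Ob L \<Longrightarrow> B \<in> Ob L \<Longrightarrow> Cd L (zer L A B) = B"
    by (auto simp: hom_def)
qed

lemma bp_in_Ob [simp]: "A \<in> Ob L \<Longrightarrow> B \<in> Ob L \<Longrightarrow> bp L A B \<in> Ob L"
  and bq2_in_Ar [simp]: "A \<in> Ob L \<Longrightarrow> B \<in> Ob L \<Longrightarrow> bq2 L A B \<in> Ar L"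
  and Dm_bq2 [simp]: "A \<in> Ob L \<Longrightarrow> B \<in> Ob L \<Longrightarrow> Dm L (bq2 L A B) = bp L A B"
  and Cd_bq2 [simp]: "A \<in> Ob L \<Longrightarrow> B \<in> Ob L \<Longrightarrow> Cd L (bq2 L A B) = B"
proof -
  have "\<forall>A \<in> Ob L. \<forall>B \<in> Ob L. bp L A B \<in> Ob L \<and>
      bq1 L A B \<in> hom L (bp L A B) A \<and> bq2 L A B \<in> hom L (bp L A B) B"
    using is_addsmc unfolding is_addsmc_def by (elim conjE) assumption
  then show "A \<in> Ob L \<Longrightarrow> B \<in> Ob L \<Longrightarrow> bp L A B \<in> Ob L"
    "A \<in> Ob L \<Longrightarrow> B \<in> Ob L \<Longrightarrow> bq2 L A B \<in> Ar L"
    "A \<in> Ob L \<Longrightarrow> B \<in> Ob L \<Longrightarrow> Dm L (bq2 L A B) = bp L A B"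
    "A \<in> Ob L \<Longrightarrow> B \<in> Ob L \<Longrightarrow> Cd L (bq2 L A B) = B"
    by (auto simp: hom_def)
qed

lemma btpl_universal:
  assumes "f \<in> Ar L" "g \<in> Ar L" "Dm L f = Dm L g"
  shows "btpl L f g \<in> hom L (Dm L f) (bp L (Cd L f) (Cd L g)) \<and>
    Cp L (btpl L f g) (bq1 L (Cd L f) (Cd L g)) = f \<and> Cp L (btpl L f g) (bq2 L (Cd L f) (Cd L g)) = g"
proof -
  have "\<forall>C \<in> Ob L. \<forall>A \<in> Ob L. \<forall>B \<in> Ob L. \<forall>f \<in> hom L C A. \<forall>g \<in> hom L C B.
      btpl L f g \<in> hom L C (bp L A B) \<and>
      Cp L (btpl L f g) (bq1 L A B) = f \<and> Cp L (btpl L f g) (bq2 L A B) = g"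
    using is_addsmc unfolding is_addsmc_def by (elim conjE) assumption
  moreover have "f \<in> hom L (Dm L f) (Cd L f)" "g \<in> hom L (Dm L f) (Cd L g)"
    using assms by (auto simp: hom_def)
  ultimately show ?thesis using assms by (metis Cd_in_Ob Dm_in_Ob)
qed

lemma btpl_in_Ar [simp]: "f \<in> Ar L \<Longrightarrow> g \<in> Ar L \<Longrightarrow> Dm L f = Dm L g \<Longrightarrow> btpl L f g \<in> Ar L"
  and Dm_btpl [simp]: "f \<in> Ar L \<Longrightarrow> g \<in> Ar L \<Longrightarrow> Dm L f = Dm L g \<Longrightarrow> Dm L (btpl L f g) = Dm L f"
  and Cd_btpl [simp]:
    "f \<in> Ar L \<Longrightarrow> g \<in> Ar L \<Longrightarrow> Dm L f = Dm L g \<Longrightarrow> Cd L (btpl L f g) = bp L (Cd L f) (Cd L g)"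
  using btpl_universal by (auto simp: hom_def)

lemma btpl_bq2: "f \<in> Ar L \<Longrightarrow> g \<in> Ar L \<Longrightarrow> Dm L f = Dm L g \<Longrightarrow> Cd L f = A \<Longrightarrow> Cd L g = B \<Longrightarrow>
    Cp L (btpl L f g) (bq2 L A B) = g"
  using btpl_universal by auto

lemma binj2_in_Ar [simp]: "A \<in> Ob L \<Longrightarrow> B \<in> Ob L \<Longrightarrow> binj2 L A B \<in> Ar L"
  and Dm_binj2 [simp]: "A \<in> Ob L \<Longrightarrow> B \<in> Ob L \<Longrightarrow> Dm L (binj2 L A B) = B"
  and Cd_binj2 [simp]: "A \<in> Ob L \<Longrightarrow> B \<in> Ob L \<Longrightarrow> Cd L (binj2 L A B) = bp L A B"
  and binj2_bq2: "A \<in> Ob L \<Longrightarrow> B \<in> Ob L \<Longrightarrow> Cp L (binj2 L A B) (bq2 L A B) = idm L B"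
  by (simp_all add: binj2_def btpl_bq2)

end

locale lnl_adjunction =
  C: cartesian_category C + L: additive_monoidal_category L
  for C :: "('o,'m,'x) ccat_scheme" and L :: "('l,'g,'y) acat_scheme" +
  fixes M :: "('o,'m,'l,'g,'z) lnl_scheme"
  assumes is_lnl: "is_lnl C L M"
begin

lemma Fo_in_Ob [simp]: "X \<in> Ob C \<Longrightarrow> Fo M X \<in> Ob L"
  and Fm_idm: "X \<in> Ob C \<Longrightarrow> Fm M (idm C X) = idm L (Fo M X)"
  and Fm_in_Ar [simp]: "f \<in> Ar C \<Longrightarrow> Fm M f \<in> Ar L"
  and Dm_Fm [simp]: "f \<in> Ar C \<Longrightarrow> Dm L (Fm M f) = Fo M (Dm C f)"
  and Cd_Fm [simp]: "f \<in> Ar C \<Longrightarrow> Cd L (Fm M f) = Fo M (Cd C f)"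
  and Fm_Cp: "f \<in> Ar C \<Longrightarrow> g \<in> Ar C \<Longrightarrow> Cd C f = Dm C g \<Longrightarrow> Fm M (Cp C f g) = Cp L (Fm M f) (Fm M g)"
  using is_lnl by (auto simp: is_lnl_def is_functor_def hom_def)

lemma Uo_in_Ob [simp]: "A \<in> Ob L \<Longrightarrow> Uo M A \<in> Ob C"
  and Um_in_Ar [simp]: "f \<in> Ar L \<Longrightarrow> Um M f \<in> Ar C"
  and Dm_Um [simp]: "f \<in> Ar L \<Longrightarrow> Dm C (Um M f) = Uo M (Dm L f)"
  and Cd_Um [simp]: "f \<in> Ar L \<Longrightarrow> Cd C (Um M f) = Uo M (Cd L f)"
  using is_lnl by (auto simp: is_lnl_def is_functor_def hom_def)

lemma eta_in_Ar [simp]: "X \<in> Ob C \<Longrightarrow> eta M X \<in> Ar C"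
  and Dm_eta [simp]: "X \<in> Ob C \<Longrightarrow> Dm C (eta M X) = X"
  and Cd_eta [simp]: "X \<in> Ob C \<Longrightarrow> Cd C (eta M X) = Uo M (Fo M X)"
  using is_lnl by (auto simp: is_lnl_def hom_def)

lemma nn_in_Ar [simp]: "A \<in> Ob L \<Longrightarrow> B \<in> Ob L \<Longrightarrow> nn M A B \<in> Ar C"
  and Dm_nn [simp]: "A \<in> Ob L \<Longrightarrow> B \<in> Ob L \<Longrightarrow> Dm C (nn M A B) = prd C (Uo M A) (Uo M B)"
  and Cd_nn [simp]: "A \<in> Ob L \<Longrightarrow> B \<in> Ob L \<Longrightarrow> Cd C (nn M A B) = Uo M (tns L A B)"
  using is_lnl by (auto simp: is_lnl_def hom_def)

lemma mm_in_Ar [simp]: "X \<in> Ob C \<Longrightarrow> Y \<in> Ob C \<Longrightarrow> mm M X Y \<in> Ar L"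
  and Dm_mm [simp]: "X \<in> Ob C \<Longrightarrow> Y \<in> Ob C \<Longrightarrow> Dm L (mm M X Y) = tns L (Fo M X) (Fo M Y)"
  and Cd_mm [simp]: "X \<in> Ob C \<Longrightarrow> Y \<in> Ob C \<Longrightarrow> Cd L (mm M X Y) = Fo M (prd C X Y)"
  and mminv_in_Ar [simp]: "X \<in> Ob C \<Longrightarrow> Y \<in> Ob C \<Longrightarrow> mminv M X Y \<in> Ar L"
  and Dm_mminv [simp]: "X \<in> Ob C \<Longrightarrow> Y \<in> Ob C \<Longrightarrow> Dm L (mminv M X Y) = Fo M (prd C X Y)"
  and Cd_mminv [simp]: "X \<in> Ob C \<Longrightarrow> Y \<in> Ob C \<Longrightarrow> Cd L (mminv M X Y) = tns L (Fo M X) (Fo M Y)"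
  and mm_mminv: "X \<in> Ob C \<Longrightarrow> Y \<in> Ob C \<Longrightarrow> Cp L (mm M X Y) (mminv M X Y) = idm L (tns L (Fo M X) (Fo M Y))"
  and mminv_mm: "X \<in> Ob C \<Longrightarrow> Y \<in> Ob C \<Longrightarrow> Cp L (mminv M X Y) (mm M X Y) = idm L (Fo M (prd C X Y))"
  using is_lnl by (auto simp: is_lnl_def hom_def)

lemma mone_in_Ar [simp]: "mone M \<in> Ar L"
  and Dm_mone [simp]: "Dm L (mone M) = tunit L"
  and Cd_mone [simp]: "Cd L (mone M) = Fo M (trm C)"
  and moneinv_in_Ar [simp]: "moneinv M \<in> Ar L"
  and Dm_moneinv [simp]: "Dm L (moneinv M) = Fo M (trm C)"
  and Cd_moneinv [simp]: "Cd L (moneinv M) = tunit L"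
  and mone_moneinv: "Cp L (mone M) (moneinv M) = idm L (tunit L)"
  using is_lnl by (auto simp: is_lnl_def hom_def)

lemma mm_natural: "f \<in> Ar C \<Longrightarrow> g \<in> Ar C \<Longrightarrow>
    Cp L (tnsm L (Fm M f) (Fm M g)) (mm M (Cd C f) (Cd C g)) = Cp L (mm M (Dm C f) (Dm C g)) (Fm M (prdm C f g))"
  and mm_assoc: "X \<in> Ob C \<Longrightarrow> Y \<in> Ob C \<Longrightarrow> Z \<in> Ob C \<Longrightarrow>
    Cp L (tnsm L (mm M X Y) (idm L (Fo M Z))) (mm M (prd C X Y) Z)
      = Cp L (tnsm L (idm L (Fo M X)) (mm M Y Z)) (mm M X (prd C Y Z))"
  and mm_unit_left: "X \<in> Ob C \<Longrightarrow> Cp L (tnsm L (mone M) (idm L (Fo M X))) (mm M (trm C) X) = idm L (Fo M X)"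
  and mm_unit_right: "X \<in> Ob C \<Longrightarrow> Cp L (tnsm L (idm L (Fo M X)) (mone M)) (mm M X (trm C)) = idm L (Fo M X)"
  using is_lnl by (simp_all add: is_lnl_def)

lemma mm_mminv_Cp:
    "X \<in> Ob C \<Longrightarrow> Y \<in> Ob C \<Longrightarrow> k \<in> Ar L \<Longrightarrow> Dm L k = tns L (Fo M X) (Fo M Y) \<Longrightarrow>
      Cp L (mm M X Y) (Cp L (mminv M X Y) k) = k"
  and mminv_mm_Cp:
    "X \<in> Ob C \<Longrightarrow> Y \<in> Ob C \<Longrightarrow> k \<in> Ar L \<Longrightarrow> Dm L k = Fo M (prd C X Y) \<Longrightarrow>
      Cp L (mminv M X Y) (Cp L (mm M X Y) k) = k"
  by (simp_all add: L.Cp_assoc[symmetric] mm_mminv mminv_mm L.Cp_idm_left)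

lemma mminv_natural:
  assumes "f \<in> Ar C" "g \<in> Ar C"
  shows "Cp L (mminv M (Dm C f) (Dm C g)) (tnsm L (Fm M f) (Fm M g))
    = Cp L (Fm M (prdm C f g)) (mminv M (Cd C f) (Cd C g))"
proof -
  let ?m = "mminv M (Dm C f) (Dm C g)" and ?m' = "mminv M (Cd C f) (Cd C g)"
  have "Cp L ?m (tnsm L (Fm M f) (Fm M g))
      = Cp L ?m (Cp L (Cp L (tnsm L (Fm M f) (Fm M g)) (mm M (Cd C f) (Cd C g))) ?m')"
    using assms by (simp add: L.Cp_assoc mm_mminv L.Cp_idm_right)
  also have "\<dots> = Cp L ?m (Cp L (Cp L (mm M (Dm C f) (Dm C g)) (Fm M (prdm C f g))) ?m')"
    using assms by (simp add: mm_natural)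
  also have "\<dots> = Cp L (Fm M (prdm C f g)) ?m'"
    using assms by (simp add: L.Cp_assoc mminv_mm_Cp)
  finally show ?thesis .
qed

lemma mminv_assoc:
  assumes o: "X \<in> Ob C" "Y \<in> Ob C" "Z \<in> Ob C"
  shows "Cp L (mminv M (prd C X Y) Z) (tnsm L (mminv M X Y) (idm L (Fo M Z)))
    = Cp L (mminv M X (prd C Y Z)) (tnsm L (idm L (Fo M X)) (mminv M Y Z))"
proof -
  let ?l = "Cp L (mminv M (prd C X Y) Z) (tnsm L (mminv M X Y) (idm L (Fo M Z)))"
    and ?r = "Cp L (mminv M X (prd C Y Z)) (tnsm L (idm L (Fo M X)) (mminv M Y Z))"
    and ?P = "Cp L (tnsm L (mm M X Y) (idm L (Fo M Z))) (mm M (prd C X Y) Z)"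
    and ?P' = "Cp L (tnsm L (idm L (Fo M X)) (mm M Y Z)) (mm M X (prd C Y Z))"
  have l_P: "Cp L ?l ?P = idm L (Fo M (prd C (prd C X Y) Z))"
  proof -
    have "Cp L ?l ?P = Cp L (mminv M (prd C X Y) Z)
        (Cp L (tnsm L (Cp L (mminv M X Y) (mm M X Y)) (Cp L (idm L (Fo M Z)) (idm L (Fo M Z))))
          (mm M (prd C X Y) Z))"
      using o by (simp add: L.Cp_assoc L.tnsm_Cp)
    also have "\<dots> = idm L (Fo M (prd C (prd C X Y) Z))"
      using o by (simp add: mminv_mm L.Cp_idm_left L.tnsm_idm)
    finally show ?thesis .
  qed
  have P'_r: "Cp L ?P' ?r = idm L (tns L (Fo M X) (tns L (Fo M Y) (Fo M Z)))"
  proof -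
    have "Cp L ?P' ?r = tnsm L (Cp L (idm L (Fo M X)) (idm L (Fo M X))) (Cp L (mm M Y Z) (mminv M Y Z))"
      using o by (simp add: L.Cp_assoc mm_mminv_Cp L.tnsm_Cp)
    also have "\<dots> = idm L (tns L (Fo M X) (tns L (Fo M Y) (Fo M Z)))"
      using o by (simp add: mm_mminv L.Cp_idm_left L.tnsm_idm)
    finally show ?thesis .
  qed
  have "?l = Cp L ?l (Cp L ?P' ?r)"
    using o by (simp add: P'_r L.Cp_idm_right L.tns_assoc)
  also have "\<dots> = Cp L (Cp L ?l ?P) ?r"
    using o mm_assoc[OF o] by (simp add: L.Cp_assoc L.tns_assoc C.prd_assoc)
  also have "\<dots> = ?r"
    using o by (simp add: l_P L.Cp_idm_left C.prd_assoc)
  finally show ?thesis .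
qed

lemma mminv_trm_left: "X \<in> Ob C \<Longrightarrow> mminv M (trm C) X = tnsm L (mone M) (idm L (Fo M X))"
proof -
  assume X: "X \<in> Ob C"
  have "tnsm L (mone M) (idm L (Fo M X))
      = Cp L (tnsm L (mone M) (idm L (Fo M X))) (Cp L (mm M (trm C) X) (mminv M (trm C) X))"
    using X by (simp add: mm_mminv L.Cp_idm_right)
  also have "\<dots> = mminv M (trm C) X"
    using X by (simp add: L.Cp_assoc[symmetric] mm_unit_left L.Cp_idm_left C.prd_trm_left L.tns_tunit_left)
  finally show ?thesis by simp
qed

lemma mminv_trm_right: "X \<in> Ob C \<Longrightarrow> mminv M X (trm C) = tnsm L (idm L (Fo M X)) (mone M)"
proof -
  assume X: "X \<in> Ob C"
  have "tnsm L (idm L (Fo M X)) (mone M)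
      = Cp L (tnsm L (idm L (Fo M X)) (mone M)) (Cp L (mm M X (trm C)) (mminv M X (trm C)))"
    using X by (simp add: mm_mminv L.Cp_idm_right)
  also have "\<dots> = mminv M X (trm C)"
    using X by (simp add: L.Cp_assoc[symmetric] mm_unit_right L.Cp_idm_left C.prd_trm_right L.tns_tunit_right)
  finally show ?thesis by simp
qed

lemma cpy_in_Ar [simp]: "X \<in> Ob C \<Longrightarrow> cpy C L M X \<in> Ar L"
  and Dm_cpy [simp]: "X \<in> Ob C \<Longrightarrow> Dm L (cpy C L M X) = Fo M X"
  and Cd_cpy [simp]: "X \<in> Ob C \<Longrightarrow> Cd L (cpy C L M X) = tns L (Fo M X) (Fo M X)"
  and wkn_in_Ar [simp]: "X \<in> Ob C \<Longrightarrow> wkn C L M X \<in> Ar L"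
  and Dm_wkn [simp]: "X \<in> Ob C \<Longrightarrow> Dm L (wkn C L M X) = Fo M X"
  and Cd_wkn [simp]: "X \<in> Ob C \<Longrightarrow> Cd L (wkn C L M X) = tunit L"
  by (simp_all add: cpy_def wkn_def)

lemma cpy_tnsm_Fm:
  assumes "f \<in> Ar C" "g \<in> Ar C" "Dm C f = X" "Dm C g = X"
  shows "Cp L (cpy C L M X) (tnsm L (Fm M f) (Fm M g)) = Cp L (Fm M (tpl C f g)) (mminv M (Cd C f) (Cd C g))"
proof -
  have X: "X \<in> Ob C"
    using assms C.Dm_in_Ob by metis
  have "Cp L (cpy C L M X) (tnsm L (Fm M f) (Fm M g))
      = Cp L (Fm M (diag C X)) (Cp L (mminv M X X) (tnsm L (Fm M f) (Fm M g)))"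
    using assms X by (simp add: cpy_def L.Cp_assoc)
  also have "\<dots> = Cp L (Fm M (diag C X)) (Cp L (Fm M (prdm C f g)) (mminv M (Cd C f) (Cd C g)))"
    using assms mminv_natural[of f g] by simp
  also have "\<dots> = Cp L (Fm M (tpl C f g)) (mminv M (Cd C f) (Cd C g))"
    using assms X by (simp add: L.Cp_assoc[symmetric] Fm_Cp[symmetric] C.diag_Cp_prdm)
  finally show ?thesis .
qed

lemma cpy_natural:
  assumes "f \<in> Ar C"
  shows "Cp L (Fm M f) (cpy C L M (Cd C f)) = Cp L (cpy C L M (Dm C f)) (tnsm L (Fm M f) (Fm M f))"
proof -
  have "Cp L (Fm M f) (cpy C L M (Cd C f)) = Cp L (Fm M (tpl C f f)) (mminv M (Cd C f) (Cd C f))"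
    using assms by (simp add: cpy_def L.Cp_assoc[symmetric] Fm_Cp[symmetric] C.Cp_diag)
  then show ?thesis
    using assms by (simp add: cpy_tnsm_Fm)
qed

lemma wkn_natural: "f \<in> Ar C \<Longrightarrow> Cp L (Fm M f) (wkn C L M (Cd C f)) = wkn C L M (Dm C f)"
  by (simp add: wkn_def L.Cp_assoc[symmetric] Fm_Cp[symmetric] C.Cp_tbang)

lemma cpy_coassoc:
  assumes X: "X \<in> Ob C"
  shows "Cp L (cpy C L M X) (tnsm L (cpy C L M X) (idm L (Fo M X)))
    = Cp L (cpy C L M X) (tnsm L (idm L (Fo M X)) (cpy C L M X))"
proof -
  let ?c = "cpy C L M X" and ?i = "idm L (Fo M X)" and ?m = "mminv M X X"
  have "Cp L ?c (tnsm L ?c ?i)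
      = Cp L (Cp L ?c (tnsm L (Fm M (diag C X)) (Fm M (idm C X)))) (tnsm L ?m ?i)"
    using X by (simp add: cpy_def L.tnsm_Cp[symmetric] Fm_idm L.Cp_idm_left L.Cp_assoc)
  also have "\<dots> = Cp L (Fm M (tpl C (diag C X) (idm C X))) (Cp L (mminv M (prd C X X) X) (tnsm L ?m ?i))"
    using X by (simp add: cpy_tnsm_Fm L.Cp_assoc)
  also have "\<dots> = Cp L (Fm M (tpl C (idm C X) (diag C X))) (Cp L (mminv M X (prd C X X)) (tnsm L ?i ?m))"
    using X by (simp add: C.tpl_diag_idm mminv_assoc)
  also have "\<dots> = Cp L (Cp L ?c (tnsm L (Fm M (idm C X)) (Fm M (diag C X)))) (tnsm L ?i ?m)"
    using X by (simp add: cpy_tnsm_Fm L.Cp_assoc)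
  also have "\<dots> = Cp L ?c (tnsm L ?i ?c)"
    using X by (simp add: cpy_def L.tnsm_Cp[symmetric] Fm_idm L.Cp_idm_left L.Cp_assoc)
  finally show ?thesis .
qed

lemma cpy_counit_left:
  assumes X: "X \<in> Ob C"
  shows "Cp L (cpy C L M X) (tnsm L (wkn C L M X) (idm L (Fo M X))) = idm L (Fo M X)"
proof -
  have "Cp L (cpy C L M X) (tnsm L (wkn C L M X) (idm L (Fo M X)))
      = Cp L (Cp L (cpy C L M X) (tnsm L (Fm M (tbang C X)) (Fm M (idm C X)))) (tnsm L (moneinv M) (idm L (Fo M X)))"
    using X by (simp add: wkn_def L.tnsm_Cp[symmetric] Fm_idm L.Cp_idm_left L.Cp_assoc)
  also have "\<dots> = tnsm L (Cp L (mone M) (moneinv M)) (idm L (Fo M X))"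
    using X cpy_tnsm_Fm[of "tbang C X" "idm C X" X]
    by (simp add: C.tpl_tbang_idm Fm_idm mminv_trm_left L.Cp_idm_left L.Cp_tnsm_idm_right
        L.tns_tunit_left)
  also have "\<dots> = idm L (Fo M X)"
    using X by (simp add: mone_moneinv L.tnsm_idm L.tns_tunit_left)
  finally show ?thesis .
qed

lemma cpy_counit_right:
  assumes X: "X \<in> Ob C"
  shows "Cp L (cpy C L M X) (tnsm L (idm L (Fo M X)) (wkn C L M X)) = idm L (Fo M X)"
proof -
  have "Cp L (cpy C L M X) (tnsm L (idm L (Fo M X)) (wkn C L M X))
      = Cp L (Cp L (cpy C L M X) (tnsm L (Fm M (idm C X)) (Fm M (tbang C X)))) (tnsm L (idm L (Fo M X)) (moneinv M))"
    using X by (simp add: wkn_def L.tnsm_Cp[symmetric] Fm_idm L.Cp_idm_left L.Cp_assoc)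
  also have "\<dots> = tnsm L (idm L (Fo M X)) (Cp L (mone M) (moneinv M))"
    using X cpy_tnsm_Fm[of "idm C X" "tbang C X" X]
    by (simp add: C.tpl_idm_tbang Fm_idm mminv_trm_right L.Cp_idm_left L.Cp_tnsm_idm_left
        L.tns_tunit_right)
  also have "\<dots> = idm L (Fo M X)"
    using X by (simp add: mone_moneinv L.tnsm_idm L.tns_tunit_right)
  finally show ?thesis .
qed

lemma ls_hom_iff: "(f,u) \<in> ls_hom C L M (X,A) (Y,B) \<longleftrightarrow>
  f \<in> Ar C \<and> Dm C f = X \<and> Cd C f = Y \<and> u \<in> Ar L \<and> Dm L u = tns L (Fo M X) A \<and> Cd L u = B"
  by (auto simp: ls_hom_def hom_def)

lemma Cp_cpy_wkn_tnsm:
  assumes "X \<in> Ob C" "E \<in> Ob L" "k \<in> Ar L" "Dm L k = tns L (Fo M X) E"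
  shows "Cp L (tnsm L (cpy C L M X) (idm L E)) (tnsm L (wkn C L M X) k) = k"
proof -
  have "tnsm L (wkn C L M X) k
      = tnsm L (Cp L (wkn C L M X) (idm L (tunit L))) (Cp L (idm L (tns L (Fo M X) E)) k)"
    using assms by (simp add: L.Cp_idm_left L.Cp_idm_right)
  also have "\<dots> = Cp L (tnsm L (tnsm L (wkn C L M X) (idm L (Fo M X))) (idm L E)) k"
    using assms by (simp add: L.tnsm_Cp L.tnsm_tunit_left L.tnsm_assoc L.tnsm_idm[symmetric])
  finally have "Cp L (tnsm L (cpy C L M X) (idm L E)) (tnsm L (wkn C L M X) k)
      = Cp L (Cp L (tnsm L (cpy C L M X) (idm L E)) (tnsm L (tnsm L (wkn C L M X) (idm L (Fo M X))) (idm L E))) k"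
    using assms by (simp add: L.Cp_assoc L.tns_assoc L.tns_tunit_left)
  also have "\<dots> = k"
    using assms by (simp add: L.Cp_tnsm_idm_right cpy_counit_left L.tnsm_idm L.Cp_idm_left L.tns_tunit_left)
  finally show ?thesis .
qed

lemma ls_comp_hom: "fu \<in> ls_hom C L M (X,A) (Y,B) \<Longrightarrow> gv \<in> ls_hom C L M (Y,B) (Z,D) \<Longrightarrow> A \<in> Ob L \<Longrightarrow>
  ls_comp C L M A fu gv \<in> ls_hom C L M (X,A) (Z,D)"
  by (cases fu; cases gv) (auto simp: ls_hom_iff ls_comp_def L.tns_assoc)

(* Both sides of associativity in LS(C) reduce to the two sides of coassociativity of cpy. *)
lemma ls_comp_assoc_snd_left:
  assumes fu: "(f,u) \<in> ls_hom C L M (X,A) (Y,B)" and gv: "(g,v) \<in> ls_hom C L M (Y,B) (Z,D)"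
    and A: "A \<in> Ob L"
  shows "Cp L (tnsm L (cpy C L M X) (idm L A))
      (tnsm L (Fm M (Cp C f g)) (Cp L (Cp L (tnsm L (cpy C L M X) (idm L A)) (tnsm L (Fm M f) u)) v))
    = Cp L (Cp L (tnsm L (Cp L (cpy C L M X) (tnsm L (idm L (Fo M X)) (cpy C L M X))) (idm L A))
        (tnsm L (idm L (Fo M X)) (tnsm L (Fm M f) u))) (tnsm L (Fm M (Cp C f g)) v)"
proof -
  have f: "f \<in> Ar C" "Dm C f = X" "Cd C f = Y" and g: "g \<in> Ar C" "Dm C g = Y" "Cd C g = Z"
    and u: "u \<in> Ar L" "Dm L u = tns L (Fo M X) A" "Cd L u = B"
    and v: "v \<in> Ar L" "Dm L v = tns L (Fo M Y) B" "Cd L v = D"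
    using fu gv by (auto simp: ls_hom_iff)
  then have o: "X \<in> Ob C" "Y \<in> Ob C" "Z \<in> Ob C" "A \<in> Ob L" "B \<in> Ob L" "D \<in> Ob L"
    using A C.Dm_in_Ob C.Cd_in_Ob L.Cd_in_Ob by metis+
  let ?c = "cpy C L M X" and ?FX = "Fo M X" and ?i = "idm L (Fo M X)"
  note simps = o f g u v L.tns_assoc
  have E1: "tnsm L (Fm M (Cp C f g)) (Cp L (Cp L (tnsm L ?c (idm L A)) (tnsm L (Fm M f) u)) v)
     = Cp L (tnsm L ?i (Cp L (tnsm L ?c (idm L A)) (tnsm L (Fm M f) u))) (tnsm L (Fm M (Cp C f g)) v)"
    using L.Cp_tnsm_idm_tnsm[of "Cp L (tnsm L ?c (idm L A)) (tnsm L (Fm M f) u)" v "Fm M (Cp C f g)"]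
    by (simp add: simps)
  have E2: "tnsm L ?i (Cp L (tnsm L ?c (idm L A)) (tnsm L (Fm M f) u))
     = Cp L (tnsm L (tnsm L ?i ?c) (idm L A)) (tnsm L ?i (tnsm L (Fm M f) u))"
    by (simp add: L.Cp_tnsm_idm_left[symmetric] L.tnsm_assoc simps)
  have E4: "Cp L (tnsm L ?c (idm L A)) (tnsm L (tnsm L ?i ?c) (idm L A)) = tnsm L (Cp L ?c (tnsm L ?i ?c)) (idm L A)"
    by (simp add: L.Cp_tnsm_idm_right simps)
  show "Cp L (tnsm L ?c (idm L A)) (tnsm L (Fm M (Cp C f g)) (Cp L (Cp L (tnsm L ?c (idm L A)) (tnsm L (Fm M f) u)) v))
     = Cp L (Cp L (tnsm L (Cp L ?c (tnsm L ?i ?c)) (idm L A)) (tnsm L ?i (tnsm L (Fm M f) u))) (tnsm L (Fm M (Cp C f g)) v)"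
    unfolding E1 E2 E4[symmetric] by (simp add: L.Cp_assoc simps)
qed

lemma tnsm_Fm_Cp_cpy:
  assumes f: "f \<in> Ar C" "Dm C f = X" and u: "u \<in> Ar L" "Dm L u = tns L (Fo M X) A" "Cd L u = B"
    and A: "A \<in> Ob L"
  shows "Cp L (tnsm L (Fm M f) u) (tnsm L (cpy C L M (Cd C f)) (idm L B))
    = Cp L (tnsm L (tnsm L (cpy C L M X) (idm L (Fo M X))) (idm L A)) (tnsm L (tnsm L (Fm M f) (Fm M f)) u)"
proof -
  have X: "X \<in> Ob C" and B: "B \<in> Ob L"
    using f u C.Dm_in_Ob L.Cd_in_Ob by metis+
  have "Cp L (tnsm L (Fm M f) u) (tnsm L (cpy C L M (Cd C f)) (idm L B))
      = tnsm L (Cp L (Fm M f) (cpy C L M (Cd C f))) u"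
    using f u B by (simp add: L.tnsm_Cp[symmetric] L.Cp_idm_right)
  also have "\<dots> = tnsm L (Cp L (cpy C L M X) (tnsm L (Fm M f) (Fm M f))) u"
    using f cpy_natural[of f] by simp
  also have "\<dots> = Cp L (tnsm L (cpy C L M X) (idm L (tns L (Fo M X) A))) (tnsm L (tnsm L (Fm M f) (Fm M f)) u)"
    using f u X A by (simp add: L.tnsm_Cp[symmetric] L.Cp_idm_left)
  also have "\<dots> = Cp L (tnsm L (tnsm L (cpy C L M X) (idm L (Fo M X))) (idm L A)) (tnsm L (tnsm L (Fm M f) (Fm M f)) u)"
    using X A by (simp add: L.tnsm_idm[symmetric] L.tnsm_assoc)
  finally show ?thesis .
qed

lemma ls_comp_assoc_snd_right:
  assumes fu: "(f,u) \<in> ls_hom C L M (X,A) (Y,B)" and gv: "(g,v) \<in> ls_hom C L M (Y,B) (Z,D)"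
    and A: "A \<in> Ob L"
  shows "Cp L (Cp L (Cp L (tnsm L (cpy C L M X) (idm L A)) (tnsm L (Fm M f) u)) (tnsm L (cpy C L M Y) (idm L B)))
      (tnsm L (Fm M g) v)
    = Cp L (Cp L (tnsm L (Cp L (cpy C L M X) (tnsm L (cpy C L M X) (idm L (Fo M X)))) (idm L A))
        (tnsm L (idm L (Fo M X)) (tnsm L (Fm M f) u))) (tnsm L (Fm M (Cp C f g)) v)"
proof -
  have f: "f \<in> Ar C" "Dm C f = X" "Cd C f = Y" and g: "g \<in> Ar C" "Dm C g = Y" "Cd C g = Z"
    and u: "u \<in> Ar L" "Dm L u = tns L (Fo M X) A" "Cd L u = B"
    and v: "v \<in> Ar L" "Dm L v = tns L (Fo M Y) B" "Cd L v = D"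
    using fu gv by (auto simp: ls_hom_iff)
  then have o: "X \<in> Ob C" "Y \<in> Ob C" "Z \<in> Ob C" "A \<in> Ob L" "B \<in> Ob L" "D \<in> Ob L"
    using A C.Dm_in_Ob C.Cd_in_Ob L.Cd_in_Ob by metis+
  let ?c = "cpy C L M X" and ?i = "idm L (Fo M X)"
  note simps = o f g u v L.tns_assoc
  have "Cp L (Cp L (Cp L (tnsm L ?c (idm L A)) (tnsm L (Fm M f) u)) (tnsm L (cpy C L M Y) (idm L B)))
      (tnsm L (Fm M g) v)
    = Cp L (Cp L (Cp L (tnsm L ?c (idm L A)) (tnsm L (tnsm L ?c ?i) (idm L A)))
        (tnsm L (tnsm L (Fm M f) (Fm M f)) u)) (tnsm L (Fm M g) v)"
    using tnsm_Fm_Cp_cpy[OF f(1,2) u A] by (simp add: L.Cp_assoc simps)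
  also have "\<dots> = Cp L (tnsm L (Cp L ?c (tnsm L ?c ?i)) (idm L A))
      (Cp L (tnsm L (tnsm L (Fm M f) (Fm M f)) u) (tnsm L (Fm M g) v))"
    by (simp add: L.Cp_tnsm_idm_right L.Cp_assoc simps)
  also have "Cp L (tnsm L (tnsm L (Fm M f) (Fm M f)) u) (tnsm L (Fm M g) v)
      = tnsm L (Cp L (Fm M f) (Fm M g)) (Cp L (tnsm L (Fm M f) u) v)"
    by (simp add: L.tnsm_assoc L.tnsm_Cp simps)
  also have "\<dots> = Cp L (tnsm L ?i (tnsm L (Fm M f) u)) (tnsm L (Fm M (Cp C f g)) v)"
    using L.Cp_tnsm_idm_tnsm[of "tnsm L (Fm M f) u" v "Fm M (Cp C f g)"]
    by (simp add: Fm_Cp simps)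
  also have "Cp L (tnsm L (Cp L ?c (tnsm L ?c ?i)) (idm L A))
      (Cp L (tnsm L ?i (tnsm L (Fm M f) u)) (tnsm L (Fm M (Cp C f g)) v))
    = Cp L (Cp L (tnsm L (Cp L ?c (tnsm L ?c ?i)) (idm L A)) (tnsm L ?i (tnsm L (Fm M f) u)))
      (tnsm L (Fm M (Cp C f g)) v)"
    by (simp add: L.Cp_assoc simps)
  finally show ?thesis .
qed

lemma ls_comp_assoc:
  assumes fu: "fu \<in> ls_hom C L M (X,A) (Y,B)" and gv: "gv \<in> ls_hom C L M (Y,B) (Z,D)"
    and hw: "hw \<in> ls_hom C L M (Z,D) (V,E)" and o: "A \<in> Ob L" "B \<in> Ob L" "D \<in> Ob L"
  shows "ls_comp C L M A (ls_comp C L M A fu gv) hw = ls_comp C L M A fu (ls_comp C L M B gv hw)"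
proof -
  obtain f u g v h w where e: "fu = (f,u)" "gv = (g,v)" "hw = (h,w)"
    by (cases fu; cases gv; cases hw) auto
  have t: "f \<in> Ar C" "Dm C f = X" "Cd C f = Y" "u \<in> Ar L" "Dm L u = tns L (Fo M X) A" "Cd L u = B"
    "g \<in> Ar C" "Dm C g = Y" "Cd C g = Z" "v \<in> Ar L" "Dm L v = tns L (Fo M Y) B" "Cd L v = D"
    "h \<in> Ar C" "Dm C h = Z" "Cd C h = V" "w \<in> Ar L" "Dm L w = tns L (Fo M Z) D" "Cd L w = E"
    using fu gv hw unfolding e ls_hom_iff by auto
  then have X: "X \<in> Ob C" "Y \<in> Ob C" "Z \<in> Ob C"
    using C.Dm_in_Ob C.Cd_in_Ob by metis+
  moreover have "Cp L (tnsm L (cpy C L M X) (idm L A))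
      (tnsm L (Fm M (Cp C f g)) (Cp L (Cp L (tnsm L (cpy C L M X) (idm L A)) (tnsm L (Fm M f) u)) v))
    = Cp L (Cp L (Cp L (tnsm L (cpy C L M X) (idm L A)) (tnsm L (Fm M f) u)) (tnsm L (cpy C L M Y) (idm L B)))
      (tnsm L (Fm M g) v)"
    using fu gv o X unfolding e
    by (simp add: ls_comp_assoc_snd_left ls_comp_assoc_snd_right cpy_coassoc)
  ultimately show ?thesis
    unfolding e ls_comp_def using t o by (simp add: C.Cp_assoc L.tns_assoc L.Cp_assoc[symmetric])
qed

lemma ls_comp_id_left:
  assumes fu: "fu \<in> ls_hom C L M (X,A) (Y,B)" and A: "A \<in> Ob L"
  shows "ls_comp C L M A (ls_id C L M X A) fu = fu"
proof -
  obtain f u where e: "fu = (f,u)"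
    by (cases fu) auto
  have t: "f \<in> Ar C" "Dm C f = X" "u \<in> Ar L" "Dm L u = tns L (Fo M X) A"
    using fu unfolding e ls_hom_iff by auto
  then have X: "X \<in> Ob C"
    using C.Dm_in_Ob by metis
  have "Cp L (tnsm L (cpy C L M X) (idm L A)) (tnsm L (Fm M (idm C X)) (tnsm L (wkn C L M X) (idm L A)))
      = tnsm L (Cp L (cpy C L M X) (tnsm L (idm L (Fo M X)) (wkn C L M X))) (idm L A)"
    using X A by (simp add: Fm_idm L.tnsm_assoc[symmetric] L.Cp_tnsm_idm_right)
  also have "\<dots> = idm L (tns L (Fo M X) A)"
    using X A by (simp add: cpy_counit_right L.tnsm_idm)
  finally show ?thesis
    unfolding e ls_comp_def ls_id_def using t X A by (simp add: C.Cp_idm_left L.Cp_idm_left)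
qed

lemma ls_comp_wkn:
  assumes fu: "(f,u) \<in> ls_hom C L M (X,A) (Y,B)" and A: "A \<in> Ob L"
    and h: "h \<in> Ar C" "Dm C h = Y" and k: "k \<in> Ar L" "Dm L k = B"
  shows "ls_comp C L M A (f,u) (h, tnsm L (wkn C L M Y) k) = (Cp C f h, Cp L u k)"
proof -
  have t: "f \<in> Ar C" "Dm C f = X" "Cd C f = Y" "u \<in> Ar L" "Dm L u = tns L (Fo M X) A" "Cd L u = B"
    using fu by (auto simp: ls_hom_iff)
  then have o: "X \<in> Ob C" "Y \<in> Ob C"
    by auto
  have "Cp L (tnsm L (Fm M f) u) (tnsm L (wkn C L M Y) k)
      = tnsm L (Cp L (Fm M f) (wkn C L M Y)) (Cp L u k)"
    using t o k by (simp add: L.tnsm_Cp)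
  also have "\<dots> = tnsm L (wkn C L M X) (Cp L u k)"
    using t wkn_natural[of f] by simp
  finally have "Cp L (tnsm L (Fm M f) u) (tnsm L (wkn C L M Y) k) = tnsm L (wkn C L M X) (Cp L u k)" .
  then show ?thesis
    using t o k A by (simp add: ls_comp_def L.Cp_assoc L.tns_assoc Cp_cpy_wkn_tnsm)
qed

lemma ls_comp_id_right:
  assumes "fu \<in> ls_hom C L M (X,A) (Y,B)" "A \<in> Ob L" "B \<in> Ob L"
  shows "ls_comp C L M A fu (ls_id C L M Y B) = fu"
  using assms ls_comp_wkn[of "fst fu" "snd fu" X A Y B "idm C Y" "idm L B"]
  by (cases fu) (auto simp: ls_id_def ls_hom_iff C.Cp_idm_right L.Cp_idm_right)

lemma ls_inv_eqI:
  assumes ph: "ph \<in> ls_hom C L M (X,A) (Y,B)" and qs: "qs \<in> ls_hom C L M (Y,B) (X,A)"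
    and o: "A \<in> Ob L" "B \<in> Ob L"
    and right_inv: "ls_comp C L M A ph qs = ls_id C L M X A"
    and left_inv: "ls_comp C L M B qs ph = ls_id C L M Y B"
  shows "ls_inv C L M (X,A) (Y,B) ph = qs"
  unfolding ls_inv_def fst_conv snd_conv
proof (rule the_equality)
  show "qs \<in> ls_hom C L M (Y,B) (X,A) \<and> ls_comp C L M A ph qs = ls_id C L M X A \<and>
      ls_comp C L M B qs ph = ls_id C L M Y B"
    using qs right_inv left_inv by simp
next
  fix qs' assume "qs' \<in> ls_hom C L M (Y,B) (X,A) \<and> ls_comp C L M A ph qs' = ls_id C L M X A \<and>
      ls_comp C L M B qs' ph = ls_id C L M Y B"
  then have qs': "qs' \<in> ls_hom C L M (Y,B) (X,A)" "ls_comp C L M B qs' ph = ls_id C L M Y B"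
    by simp_all
  have "qs' = ls_comp C L M B qs' (ls_comp C L M A ph qs)"
    using ls_comp_id_right[OF qs'(1)] o right_inv by simp
  also have "\<dots> = ls_comp C L M B (ls_comp C L M B qs' ph) qs"
    using ls_comp_assoc[OF qs'(1) ph qs] o by simp
  also have "\<dots> = qs"
    using ls_comp_id_left[OF qs] o qs'(2) by simp
  finally show "qs' = qs" .
qed

end

locale gen_diff_seely =
  fixes C :: "('o,'m,'x) ccat_scheme" and L :: "('l,'g,'y) acat_scheme"
    and M :: "('o,'m,'l,'g,'z) lnl_scheme" and T :: "'m \<Rightarrow> 'm \<times> 'g" and lam :: "'o \<Rightarrow> 'l"
  assumes is_gdsc: "is_gdsc C L M T lam"

sublocale gen_diff_seely \<subseteq> lnl_adjunction C L M
  using is_gdsc by unfold_locales (simp_all add: is_gdsc_def)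

context gen_diff_seely
begin

lemma lam_in_Ob [simp]: "X \<in> Ob C \<Longrightarrow> lam X \<in> Ob L"
  and lam_Uo [simp]: "A \<in> Ob L \<Longrightarrow> lam (Uo M A) = A"
  and T_in_ls_hom: "h \<in> Ar C \<Longrightarrow> T h \<in> ls_hom C L M (Dm C h, lam (Dm C h)) (Cd C h, lam (Cd C h))"
  and T_Cp: "h \<in> Ar C \<Longrightarrow> k \<in> Ar C \<Longrightarrow> Cd C h = Dm C k \<Longrightarrow>
    T (Cp C h k) = ls_comp C L M (lam (Dm C h)) (T h) (T k)"
  and fst_T [simp]: "h \<in> Ar C \<Longrightarrow> fst (T h) = h"
  using is_gdsc by (simp_all add: is_gdsc_def)

lemma phi_invertible:
  assumes "X \<in> Ob C" "Y \<in> Ob C"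
  shows "\<exists>psi \<in> ls_hom C L M (prd C X Y, bp L (lam X) (lam Y)) (prd C X Y, lam (prd C X Y)).
    ls_comp C L M (lam (prd C X Y)) (phi C L T X Y) psi = ls_id C L M (prd C X Y) (lam (prd C X Y)) \<and>
    ls_comp C L M (bp L (lam X) (lam Y)) psi (phi C L T X Y) = ls_id C L M (prd C X Y) (bp L (lam X) (lam Y))"
proof -
  have "\<forall>X \<in> Ob C. \<forall>Y \<in> Ob C.
      \<exists>psi \<in> ls_hom C L M (prd C X Y, bp L (lam X) (lam Y)) (prd C X Y, lam (prd C X Y)).
      ls_comp C L M (lam (prd C X Y)) (phi C L T X Y) psi = ls_id C L M (prd C X Y) (lam (prd C X Y)) \<and>
      ls_comp C L M (bp L (lam X) (lam Y)) psi (phi C L T X Y) = ls_id C L M (prd C X Y) (bp L (lam X) (lam Y))"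
    using is_gdsc unfolding is_gdsc_def by (elim conjE) assumption
  then show ?thesis using assms by blast
qed

lemma Wk_comp_i2:
  assumes "X \<in> Ob C" "Y \<in> Ob C" "A \<in> Ob L" "B \<in> Ob L" "fu \<in> ls_hom C L M (X,A) (Y,B)"
  shows "ls_comp C L M A (Wk C L M A fu) (i2 C L M T lam Y (Uo M B))
    = ls_comp C L M A (i2 C L M T lam X (Uo M A)) (T (compr C L M A fu))"
proof -
  have "\<forall>X \<in> Ob C. \<forall>Y \<in> Ob C. \<forall>A \<in> Ob L. \<forall>B \<in> Ob L. \<forall>fu \<in> ls_hom C L M (X,A) (Y,B).
      ls_comp C L M A (Wk C L M A fu) (i2 C L M T lam Y (Uo M B))
        = ls_comp C L M (lam (Uo M A)) (i2 C L M T lam X (Uo M A)) (T (compr C L M A fu))"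
    using is_gdsc unfolding is_gdsc_def by (elim conjE) assumption
  then show ?thesis using assms by simp
qed

lemma snd_T_in_Ar [simp]: "h \<in> Ar C \<Longrightarrow> snd (T h) \<in> Ar L"
  and Dm_snd_T [simp]: "h \<in> Ar C \<Longrightarrow> Dm L (snd (T h)) = tns L (Fo M (Dm C h)) (lam (Dm C h))"
  and Cd_snd_T [simp]: "h \<in> Ar C \<Longrightarrow> Cd L (snd (T h)) = lam (Cd C h)"
  using T_in_ls_hom[of h] by (auto simp: ls_hom_def hom_def split: prod.splits)

lemma T_eq_pair: "h \<in> Ar C \<Longrightarrow> T h = (h, snd (T h))"
  by (simp add: prod_eq_iff)

lemma phi_eq:
  assumes "X \<in> Ob C" "Y \<in> Ob C"
  shows "phi C L T X Y = (idm C (prd C X Y), btpl L (snd (T (pi1 C X Y))) (snd (T (pi2 C X Y))))"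
proof -
  have "tpl C (pi1 C X Y) (pi2 C X Y) = idm C (prd C X Y)"
    using C.tpl_eta[of "idm C (prd C X Y)" X Y] assms by (simp add: C.Cp_idm_left)
  then show ?thesis
    using assms by (simp add: phi_def ls_pair_def)
qed

lemma phi_in_ls_hom:
  "X \<in> Ob C \<Longrightarrow> Y \<in> Ob C \<Longrightarrow>
    phi C L T X Y \<in> ls_hom C L M (prd C X Y, lam (prd C X Y)) (prd C X Y, bp L (lam X) (lam Y))"
  by (simp add: phi_eq ls_hom_iff)

lemma T_pi2_eq_phi_comp:
  assumes "X \<in> Ob C" "Y \<in> Ob C"
  shows "T (pi2 C X Y) = ls_comp C L M (lam (prd C X Y)) (phi C L T X Y)
    (pi2 C X Y, tnsm L (wkn C L M (prd C X Y)) (bq2 L (lam X) (lam Y)))"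
proof -
  have "ls_comp C L M (lam (prd C X Y)) (phi C L T X Y)
      (pi2 C X Y, tnsm L (wkn C L M (prd C X Y)) (bq2 L (lam X) (lam Y)))
    = (pi2 C X Y, snd (T (pi2 C X Y)))"
    using assms phi_in_ls_hom[OF assms] by (simp add: phi_eq ls_comp_wkn C.Cp_idm_left L.btpl_bq2)
  then show ?thesis
    using assms T_eq_pair[of "pi2 C X Y"] by simp
qed

abbreviation phi_inv :: "'o \<Rightarrow> 'o \<Rightarrow> 'm \<times> 'g" where
  "phi_inv X Y \<equiv>
    ls_inv C L M (prd C X Y, lam (prd C X Y)) (prd C X Y, bp L (lam X) (lam Y)) (phi C L T X Y)"

lemma
  assumes "X \<in> Ob C" "Y \<in> Ob C"
  shows phi_inv_in_ls_hom: "phi_inv X Y \<in> ls_hom C L M (prd C X Y, bp L (lam X) (lam Y)) (prd C X Y, lam (prd C X Y))"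
    and phi_inv_comp_phi: "ls_comp C L M (bp L (lam X) (lam Y)) (phi_inv X Y) (phi C L T X Y)
      = ls_id C L M (prd C X Y) (bp L (lam X) (lam Y))"
    and fst_phi_inv: "fst (phi_inv X Y) = idm C (prd C X Y)"
proof -
  let ?Q = "prd C X Y" and ?B = "bp L (lam X) (lam Y)"
  obtain psi where psi: "psi \<in> ls_hom C L M (?Q, ?B) (?Q, lam ?Q)"
    "ls_comp C L M (lam ?Q) (phi C L T X Y) psi = ls_id C L M ?Q (lam ?Q)"
    "ls_comp C L M ?B psi (phi C L T X Y) = ls_id C L M ?Q ?B"
    using phi_invertible[OF assms] by blast
  have "phi_inv X Y = psi"
    using assms psi phi_in_ls_hom[OF assms] by (intro ls_inv_eqI) simp_all
  moreover have "fst psi = idm C ?Q"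
  proof -
    have "fst (ls_comp C L M (lam ?Q) (phi C L T X Y) psi) = idm C ?Q"
      using psi(2) by (simp add: ls_id_def)
    then show ?thesis
      using assms psi(1) by (cases psi) (simp add: phi_eq ls_comp_def ls_hom_iff C.Cp_idm_left)
  qed
  ultimately show "phi_inv X Y \<in> ls_hom C L M (?Q, ?B) (?Q, lam ?Q)"
    "ls_comp C L M ?B (phi_inv X Y) (phi C L T X Y) = ls_id C L M ?Q ?B"
    "fst (phi_inv X Y) = idm C ?Q"
    using psi by simp_all
qed

lemma ls_inj2_in_ls_hom:
  "X \<in> Ob C \<Longrightarrow> A \<in> Ob L \<Longrightarrow> B \<in> Ob L \<Longrightarrow> ls_inj2 C L M X A B \<in> ls_hom C L M (X, B) (X, bp L A B)"
  by (simp add: ls_inj2_def ls_hom_iff L.tns_tunit_left)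

lemma i2_in_ls_hom:
  "X \<in> Ob C \<Longrightarrow> Y \<in> Ob C \<Longrightarrow> i2 C L M T lam X Y \<in> ls_hom C L M (prd C X Y, lam Y) (prd C X Y, lam (prd C X Y))"
  unfolding i2_def by (rule ls_comp_hom[OF ls_inj2_in_ls_hom phi_inv_in_ls_hom]) simp_all

lemma fst_i2: "X \<in> Ob C \<Longrightarrow> Y \<in> Ob C \<Longrightarrow> fst (i2 C L M T lam X Y) = idm C (prd C X Y)"
  by (simp add: i2_def ls_comp_def ls_inj2_def fst_phi_inv C.Cp_idm_left)

lemma i2_comp_T_pi2:
  assumes "X \<in> Ob C" "Y \<in> Ob C"
  shows "ls_comp C L M (lam Y) (i2 C L M T lam X Y) (T (pi2 C X Y))
    = (pi2 C X Y, tnsm L (wkn C L M (prd C X Y)) (idm L (lam Y)))"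
proof -
  let ?Q = "prd C X Y" and ?B = "bp L (lam X) (lam Y)"
  let ?inj = "ls_inj2 C L M ?Q (lam X) (lam Y)"
    and ?proj = "(pi2 C X Y, tnsm L (wkn C L M ?Q) (bq2 L (lam X) (lam Y)))"
  have inj: "?inj \<in> ls_hom C L M (?Q, lam Y) (?Q, ?B)"
    using assms by (simp add: ls_inj2_in_ls_hom)
  have proj: "?proj \<in> ls_hom C L M (?Q, ?B) (Y, lam Y)"
    using assms by (simp add: ls_hom_iff L.tns_tunit_left)
  have "ls_comp C L M ?B (phi_inv X Y) (T (pi2 C X Y))
      = ls_comp C L M ?B (ls_comp C L M ?B (phi_inv X Y) (phi C L T X Y)) ?proj"
    using assms by (simp add: T_pi2_eq_phi_comp ls_comp_assoc[OF phi_inv_in_ls_hom phi_in_ls_hom proj])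
  also have "\<dots> = ?proj"
    using assms by (simp add: phi_inv_comp_phi ls_comp_id_left[OF proj])
  finally have "ls_comp C L M (lam Y) (i2 C L M T lam X Y) (T (pi2 C X Y)) = ls_comp C L M (lam Y) ?inj ?proj"
    using assms T_in_ls_hom[of "pi2 C X Y"]
    by (simp add: i2_def ls_comp_assoc[OF inj phi_inv_in_ls_hom])
  also have "\<dots> = (pi2 C X Y, Cp L (tnsm L (wkn C L M ?Q) (binj2 L (lam X) (lam Y))) (bq2 L (lam X) (lam Y)))"
    using assms inj by (simp add: ls_inj2_def ls_comp_wkn C.Cp_idm_left)
  also have "\<dots> = (pi2 C X Y, tnsm L (wkn C L M ?Q) (idm L (lam Y)))"
    using assms L.tnsm_Cp[of "wkn C L M ?Q" "idm L (tunit L)" "binj2 L (lam X) (lam Y)" "bq2 L (lam X) (lam Y)"]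
    by (simp add: L.tnsm_tunit_left L.binj2_bq2 L.Cp_idm_right)
  finally show ?thesis .
qed

lemma compr_in_hom:
  "(f,u) \<in> ls_hom C L M (X,A) (Y,B) \<Longrightarrow> A \<in> Ob L \<Longrightarrow>
    compr C L M A (f,u) \<in> hom C (prd C X (Uo M A)) (prd C Y (Uo M B))"
  by (auto simp: compr_def ls_hom_iff hom_def)

lemma Wk_in_ls_hom:
  "(f,u) \<in> ls_hom C L M (X,A) (Y,B) \<Longrightarrow> A \<in> Ob L \<Longrightarrow>
    Wk C L M A (f,u) \<in> ls_hom C L M (prd C X (Uo M A), A) (prd C Y (Uo M B), B)"
  using compr_in_hom[of f u X A Y B] by (auto simp: Wk_def ls_hom_iff hom_def)

lemma D2_eq:
  "X \<in> Ob C \<Longrightarrow> Y \<in> Ob C \<Longrightarrow> h \<in> Ar C \<Longrightarrow> Dm C h = prd C X Y \<Longrightarrow>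
    D2 C L M T lam X Y h = (idm C (prd C X Y), snd (ls_comp C L M (lam Y) (i2 C L M T lam X Y) (T h)))"
  by (simp add: D2_def Dif_def ls_comp_def fst_i2 C.Cp_idm_left)



lemma i2_comp_T_compr_pi2:
  assumes o: "X \<in> Ob C" "Y \<in> Ob C" "A \<in> Ob L" "B \<in> Ob L"
    and fu: "(f,u) \<in> ls_hom C L M (X,A) (Y,B)"
  shows "ls_comp C L M A (i2 C L M T lam X (Uo M A)) (T (Cp C (compr C L M A (f,u)) (pi2 C Y (Uo M B))))
    = (Cp C (compr C L M A (f,u)) (pi2 C Y (Uo M B)), snd (Wk C L M A (f,u)))"
proof -
  let ?c = "compr C L M A (f,u)" and ?p = "pi2 C Y (Uo M B)"
    and ?iX = "i2 C L M T lam X (Uo M A)" and ?iY = "i2 C L M T lam Y (Uo M B)"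
  have c: "?c \<in> Ar C" "Dm C ?c = prd C X (Uo M A)" "Cd C ?c = prd C Y (Uo M B)"
    using compr_in_hom[OF fu o(3)] by (simp_all add: hom_def)
  have iX: "?iX \<in> ls_hom C L M (prd C X (Uo M A), A) (prd C X (Uo M A), lam (prd C X (Uo M A)))"
    using o i2_in_ls_hom[of X "Uo M A"] by simp
  have iY: "?iY \<in> ls_hom C L M (prd C Y (Uo M B), B) (prd C Y (Uo M B), lam (prd C Y (Uo M B)))"
    using o i2_in_ls_hom[of Y "Uo M B"] by simp
  have Tc: "T ?c \<in> ls_hom C L M (prd C X (Uo M A), lam (prd C X (Uo M A))) (prd C Y (Uo M B), lam (prd C Y (Uo M B)))"
    and Tp: "T ?p \<in> ls_hom C L M (prd C Y (Uo M B), lam (prd C Y (Uo M B))) (Uo M B, B)"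
    using c o T_in_ls_hom[of ?c] T_in_ls_hom[of ?p] by simp_all
  have Wk: "Wk C L M A (f,u) \<in> ls_hom C L M (prd C X (Uo M A), A) (prd C Y (Uo M B), B)"
    using Wk_in_ls_hom[OF fu o(3)] .
  have "ls_comp C L M A ?iX (T (Cp C ?c ?p)) = ls_comp C L M A (ls_comp C L M A ?iX (T ?c)) (T ?p)"
    using c o by (simp add: T_Cp ls_comp_assoc[OF iX Tc Tp])
  also have "\<dots> = ls_comp C L M A (ls_comp C L M A (Wk C L M A (f,u)) ?iY) (T ?p)"
    using o fu by (simp add: Wk_comp_i2)
  also have "\<dots> = ls_comp C L M A (Wk C L M A (f,u)) (ls_comp C L M B ?iY (T ?p))"
    using o by (simp add: ls_comp_assoc[OF Wk iY Tp])
  also have "\<dots> = ls_comp C L M A (Wk C L M A (f,u)) (?p, tnsm L (wkn C L M (prd C Y (Uo M B))) (idm L B))"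
    using o i2_comp_T_pi2[of Y "Uo M B"] by simp
  also have "\<dots> = (Cp C ?c ?p, snd (Wk C L M A (f,u)))"
    using o Wk c by (simp add: Wk_def ls_comp_wkn L.Cp_idm_right ls_hom_iff)
  finally show ?thesis .
qed

end

theorem lemma4p17:
  assumes "is_gdsc C L M T lam"
    and "X \<in> Ob C" and "Y \<in> Ob C" and "A \<in> Ob L" and "B \<in> Ob L"
    and "(f, u) \<in> ls_hom C L M (X, A) (Y, B)"
    and "g = Cp C (compr C L M A (f, u)) (pi2 C Y (Uo M B))"
  shows "D2 C L M T lam X (Uo M A) g = reindex C L M (pi1 C X (Uo M A)) A (idm C X, u)"
proof -
  interpret gen_diff_seely C L M T lam
    by (rule gen_diff_seely.intro) (fact assms(1))
  have g: "g \<in> Ar C" "Dm C g = prd C X (Uo M A)"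
    using assms(2-7) compr_in_hom[OF assms(6,4)] by (simp_all add: hom_def)
  have "D2 C L M T lam X (Uo M A) g
      = (idm C (prd C X (Uo M A)), snd (ls_comp C L M A (i2 C L M T lam X (Uo M A)) (T g)))"
    using assms(2,4) g by (simp add: D2_eq)
  also have "\<dots> = (idm C (prd C X (Uo M A)), snd (Wk C L M A (f, u)))"
    using i2_comp_T_compr_pi2[OF assms(2-6)] assms(7) by simp
  also have "\<dots> = reindex C L M (pi1 C X (Uo M A)) A (idm C X, u)"
    using assms(2,4,6) by (simp add: Wk_def reindex_def ls_hom_iff)
  finally show ?thesis .
qed

end
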